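(* Let $\mathcal{H}$ be a complex separable Hilbert space, $n\in\mathbb{N}$, $b\in(0,\infty)$. Define $$H_n([0,b];\mathcal{H}) := \big\{f:[0,b]\to\mathcal{H} \,\big|\, f^{(n)}\in L^2((0,b);\mathcal{H});\ f^{(j)}\in AC([0,b];\mathcal{H}),\ f^{(j)}(0)=f^{(j)}(b)=0,\ j=0,\dots,n-1\big\}$$ with norm $\|f\|=\|f^{(n)}\|_{L^2((0,b);\mathcal{H})}$, and $$H^n_0((0,b);\mathcal{H}) := \big\{f:[0,b]\to\mathcal{H} \,\big|\, f^{(j)}\in AC([0,b];\mathcal{H}),\ j=0,\dots,n-1;\ f^{(k)}\in L^2((0,b);\mathcal{H}),\ k=0,\dots,n;\ f^{(j)}(0)=f^{(j)}(b)=0,\ j=0,\dots,n-1\big\}$$ with the standard Sobolev norm $\big(\sum_{k=0}^n\|f^{(k)}\|^2_{L^2((0,b);\mathcal{H})}\big)^{1/2}$. Then: (i) $H_n([0,b];\mathcal{H})=H^n_0((0,b);\mathcal{H})$ as sets; in particular $f\in H_n([0,b];\mathcal{H})$ implies $f^{(j)}\in L^2((0,b);\mathcal{H})$ for $j=0,\dots,n$; and the two norms are equivalent. (ii) With $d(x)=\min\{x,|b-x|\}$, $x\in(0,b)$, $$\int_0^b\big\|f^{(n)}(x)\big\|^2_{\mathcal{H}}\,dx\ >\ \frac{[(2n-1)!!]^2}{2^{2n}}\int_0^b\frac{\|f(x)\|^2_{\mathcal{H}}}{d(x)^{2n}}\,dx,\qquad f\in H^n_0((0,b);\mathcal{H})\setminus\{0\}.$$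 (iii) The constant $[(2n-1)!!]^2/2^{2n}$ in (ii) is sharp, i.e., for every $\varepsilon>0$ the inequality fails for some $f\in H^n_0((0,b);\mathcal{H})$ when the constant is replaced by $[(2n-1)!!]^2/2^{2n}+\varepsilon$.
   Context: $L^2((0,b);\mathcal{H})$ is the Bochner space of strongly measurable $\mathcal{H}$-valued functions $f$ with $\|f(\cdot)\|_{\mathcal{H}}^2$ integrable. $f\in AC([0,b];\mathcal{H})$ means $f(x)=f(x_0)+\int_{x_0}^x g(t)\,dt$ for some $g\in L^1((0,b);\mathcal{H})$ (Bochner integral), and then $f'=g$ a.e. (strong derivative). $(2n-1)!!=(2n-1)(2n-3)\cdots3\cdot1$. *)

theory Defs
  imports "HOL-Analysis.Analysis"
begin

text \<open>The Hilbert space is modelled by a type of class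
  real_inner + banach + second_countable_topology (separable Hilbert space; a complex
  Hilbert space is such a space with the real part of its inner product, same norm).\<close>

definition odd_double_fact :: "nat \<Rightarrow> nat" where
  "odd_double_fact n = (\<Prod>k\<in>{1..n}. 2 * k - 1)"

text \<open>Membership in the Bochner space L^2((0,b); H): strongly (= Borel, for separable
  targets) measurable and norm-square integrable.\<close>
definition L2_on :: "real \<Rightarrow> (real \<Rightarrow> 'a::{banach, second_countable_topology}) \<Rightarrow> bool" where
  "L2_on b g \<longleftrightarrow> set_borel_measurable lebesgue {0<..<b} g \<and>
     set_integrable lebesgue {0<..<b} (\<lambda>x. (norm (g x))\<^sup>2)"

definition L2_norm_on :: "real \<Rightarrow> (real \<Rightarrow> 'a::{banach, second_countable_topology}) \<Rightarrow> real" where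
  "L2_norm_on b g = sqrt (LINT x:{0<..<b}|lebesgue. (norm (g x))\<^sup>2)"

text \<open>f is absolutely continuous on [0,b] with strong (a.e.) derivative g, i.e.
  g in L^1((0,b);H) and f(x) = f(0) + Bochner-integral of g over [0,x] for x in [0,b].\<close>
definition AC_with_deriv :: "real \<Rightarrow> (real \<Rightarrow> 'a::{banach, second_countable_topology}) \<Rightarrow> (real \<Rightarrow> 'a) \<Rightarrow> bool" where
  "AC_with_deriv b f g \<longleftrightarrow> set_integrable lebesgue {0<..<b} g \<and>
     (\<forall>x\<in>{0..b}. f x = f 0 + (LINT t:{0..x}|lebesgue. g t))"

text \<open>g is a chain of derivatives of f up to order n on [0,b]: g 0 = f on [0,b],
  g j is AC on [0,b] with derivative g (j+1) for j < n, and the boundary conditions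
  g j 0 = g j b = 0 for j = 0..n-1.  Thus g j represents f^(j).\<close>
definition deriv_chain :: "real \<Rightarrow> nat \<Rightarrow> (real \<Rightarrow> 'a::{banach, second_countable_topology}) \<Rightarrow> (nat \<Rightarrow> real \<Rightarrow> 'a) \<Rightarrow> bool" where
  "deriv_chain b n f g \<longleftrightarrow> (\<forall>x\<in>{0..b}. g 0 x = f x) \<and>
     (\<forall>j<n. AC_with_deriv b (g j) (g (Suc j)) \<and> g j 0 = 0 \<and> g j b = 0)"

definition H_n :: "real \<Rightarrow> nat \<Rightarrow> (real \<Rightarrow> 'a::{banach, second_countable_topology}) set" where
  "H_n b n = {f. \<exists>g. deriv_chain b n f g \<and> L2_on b (g n)}"

definition H0_n :: "real \<Rightarrow> nat \<Rightarrow> (real \<Rightarrow> 'a::{banach, second_countable_topology}) set" where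
  "H0_n b n = {f. \<exists>g. deriv_chain b n f g \<and> (\<forall>k\<le>n. L2_on b (g k))}"

definition sobolev_norm :: "real \<Rightarrow> nat \<Rightarrow> (nat \<Rightarrow> real \<Rightarrow> 'a::{banach, second_countable_topology}) \<Rightarrow> real" where
  "sobolev_norm b n g = sqrt (\<Sum>k\<le>n. (L2_norm_on b (g k))\<^sup>2)"

definition dist_bd :: "real \<Rightarrow> real \<Rightarrow> real" where
  "dist_bd b x = min x \<bar>b - x\<bar>"

end

theory Submission
  imports Defs
begin

(* On each half of (0,b) every derivative of f is dominated by the primitive of the next one,
   taken from the nearer endpoint.  For such a pair u, v the weighted Hardy inequality
     int_0^a u^2 x^(-2k-2) <= (k+1/2)^(-2) int_0^a v^2 x^(-2k)
   follows from Cauchy-Schwarz with the weight t^(1/2-k) and Tonelli, and comes with an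
   explicit positive remainder.  Iterating it from k = n-1 down to 0 yields the constant
   prod_k (k+1/2)^(-2) = 4^n / ((2n-1)!!)^2, and the remainder of the step from f' to f
   vanishes only if f = 0, which gives (ii).  The same iteration with the weights bounded on
   (0,b/2) controls all lower derivatives by f^(n), which gives (i).  For (iii) take
   x^p (b-x)^n with p = n - 1/2 + delta: near 0 both sides are dominated by multiples of
   x^(2 delta - 1) whose ratio tends to the constant, the integrals blow up like 1/(2 delta),
   and everything else stays bounded as delta -> 0. *)

section \<open>Weighted Hardy inequality on a half-interval\<close>

lemma nn_integral_powr_Ioo:
  fixes e x :: real
  assumes "e > -1" "0 < x"
  shows "(\<integral>\<^sup>+t. indicator {0<..<x} t * ennreal (t powr e) \<partial>lborel) = ennreal (x powr (e+1)/(e+1))"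
proof -
  have "(\<integral>\<^sup>+t. ennreal (indicator {0..x} t * t powr e) \<partial>lborel) = ennreal (x powr (e+1)/(e+1))"
    by (rule nn_integral_has_integral_lebesgue) (use has_integral_powr_from_0[of e x] assms in auto)
  also have "(\<integral>\<^sup>+t. ennreal (indicator {0..x} t * t powr e) \<partial>lborel)
           = (\<integral>\<^sup>+t. indicator {0<..<x} t * ennreal (t powr e) \<partial>lborel)"
    by (intro nn_integral_cong_AE eventually_mono[OF AE_lborel_singleton[of 0]]
       eventually_mono[OF AE_lborel_singleton[of x]]) (auto simp: indicator_def)
  finally show ?thesis .
qed

lemma nn_integral_powr_Ioo_tail:
  fixes e t a :: real
  assumes "e > 1" "0 < t" "t < a"
  shows "(\<integral>\<^sup>+x. indicator {t<..<a} x * ennreal (x powr (-e)) \<partial>lborel)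
       = ennreal ((t powr (1-e) - a powr (1-e))/(e-1))"
proof -
  have "((\<lambda>x. - (x powr (1-e)) / (e-1)) has_vector_derivative (x powr (-e))) (at x within {t..a})"
    if "x \<in> {t..a}" for x
  proof -
    have "x > 0" using that assms by auto
    have "((\<lambda>x. - (x powr (1-e)) / (e-1)) has_real_derivative (- ((1-e) * x powr (1-e-1)) / (e-1))) (at x)"
      using assms by (auto intro!: derivative_eq_intros simp: \<open>x>0\<close>)
    moreover have "- ((1-e) * x powr (1-e-1)) / (e-1) = x powr (-e)"
      using assms by (simp add: field_simps)
    ultimately show ?thesis
      by (auto simp: has_real_derivative_iff_has_vector_derivative intro: has_vector_derivative_at_within)
  qed
  then have "((\<lambda>x. x powr (-e)) has_integral (- (a powr (1-e)) / (e-1) - - (t powr (1-e)) / (e-1))) {t..a}"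
    by (intro fundamental_theorem_of_calculus) (use assms in auto)
  then have "(\<integral>\<^sup>+x. ennreal (indicator {t..a} x * x powr (-e)) \<partial>lborel)
           = ennreal (- (a powr (1-e)) / (e-1) - - (t powr (1-e)) / (e-1))"
    by (intro nn_integral_has_integral_lebesgue) simp
  also have "(\<integral>\<^sup>+x. ennreal (indicator {t..a} x * x powr (-e)) \<partial>lborel)
           = (\<integral>\<^sup>+x. indicator {t<..<a} x * ennreal (x powr (-e)) \<partial>lborel)"
  proof (intro nn_integral_cong_AE)
    have "AE x in lborel. x \<noteq> t \<and> x \<noteq> a" using AE_lborel_singleton by (intro AE_conjI) auto
    then show "AE x in lborel. ennreal (indicator {t..a} x * x powr (-e))
                             = indicator {t<..<a} x * ennreal (x powr (-e))"
      by eventually_elim (auto simp: indicator_def)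
  qed
  finally show ?thesis by (simp add: diff_divide_distrib)
qed

lemma nn_integral_Ioo_Cauchy_Schwarz_powr:
  fixes v :: "real \<Rightarrow> real" and x \<beta> :: real
  assumes [measurable]: "v \<in> borel_measurable borel" and v0: "\<And>t. 0 \<le> v t"
    and x: "0 < x" and \<beta>: "\<beta> < 1"
  shows "(\<integral>\<^sup>+t. indicator {0<..<x} t * ennreal (v t) \<partial>lborel)^2 \<le>
     ennreal (x powr (1-\<beta>)/(1-\<beta>)) * (\<integral>\<^sup>+t. indicator {0<..<x} t * ennreal (t powr \<beta> * (v t)^2) \<partial>lborel)"
proof -
  define f where "f t = indicator {0<..<x} t * ennreal (t powr (-\<beta>/2))" for t :: real
  define g where "g t = indicator {0<..<x} t * ennreal (t powr (\<beta>/2) * v t)" for t :: real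
  have [measurable]: "f \<in> borel_measurable borel" "g \<in> borel_measurable borel"
    unfolding f_def g_def by measurable
  have fg: "f t * g t = indicator {0<..<x} t * ennreal (v t)" for t
  proof (cases "t \<in> {0<..<x}")
    case True
    then have "t powr (-\<beta>/2) * (t powr (\<beta>/2) * v t) = v t"
      by (simp add: mult.assoc[symmetric] powr_add[symmetric])
    then show ?thesis using True v0 unfolding f_def g_def by (simp add: ennreal_mult[symmetric])
  qed (simp add: f_def g_def)
  have ff: "f t ^ 2 = indicator {0<..<x} t * ennreal (t powr (-\<beta>))" for t
  proof (cases "t \<in> {0<..<x}")
    case True
    then have "(t powr (-\<beta>/2))^2 = t powr (-\<beta>)"
      by (simp add: power2_eq_square powr_add[symmetric])
    then show ?thesis using True unfolding f_def by (simp add: ennreal_power)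
  qed (simp add: f_def)
  have gg: "g t ^ 2 = indicator {0<..<x} t * ennreal (t powr \<beta> * (v t)^2)" for t
  proof (cases "t \<in> {0<..<x}")
    case True
    then have "(t powr (\<beta>/2) * v t)^2 = t powr \<beta> * (v t)^2"
      by (simp add: power2_eq_square powr_add[symmetric] algebra_simps)
    then show ?thesis using True v0 unfolding g_def by (simp add: ennreal_power)
  qed (simp add: g_def)
  have "(\<integral>\<^sup>+t. f t * g t \<partial>lborel)\<^sup>2 \<le> (\<integral>\<^sup>+t. f t ^ 2 \<partial>lborel) * (\<integral>\<^sup>+t. g t ^ 2 \<partial>lborel)"
    by (rule Cauchy_Schwarz_nn_integral) auto
  moreover have "(\<integral>\<^sup>+t. f t ^ 2 \<partial>lborel) = ennreal (x powr (1-\<beta>)/(1-\<beta>))"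
    using nn_integral_powr_Ioo[of "-\<beta>" x] \<beta> x by (simp add: ff)
  ultimately show ?thesis by (simp add: fg gg)
qed

lemma nn_integral_Ioo_swap:
  fixes W h :: "real \<Rightarrow> ennreal"
  assumes [measurable]: "W \<in> borel_measurable borel" "h \<in> borel_measurable borel"
  shows "(\<integral>\<^sup>+x. indicator {0<..<a} x * W x * (\<integral>\<^sup>+t. indicator {0<..<x} t * h t \<partial>lborel) \<partial>lborel)
       = (\<integral>\<^sup>+t. indicator {0<..<a} t * h t * (\<integral>\<^sup>+x. indicator {t<..<a} x * W x \<partial>lborel) \<partial>lborel)"
proof -
  define T where "T x t = (if 0 < t \<and> t < x \<and> x < a then W x * h t else 0)" for x t
  have "indicator {0<..<a} x * W x * (\<integral>\<^sup>+t. indicator {0<..<x} t * h t \<partial>lborel)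
      = (\<integral>\<^sup>+t. T x t \<partial>lborel)" for x
  proof -
    have "indicator {0<..<a} x * W x * (\<integral>\<^sup>+t. indicator {0<..<x} t * h t \<partial>lborel)
        = (\<integral>\<^sup>+t. indicator {0<..<a} x * W x * (indicator {0<..<x} t * h t) \<partial>lborel)"
      by (simp add: nn_integral_cmult)
    also have "\<dots> = (\<integral>\<^sup>+t. T x t \<partial>lborel)"
      by (intro nn_integral_cong) (auto simp: T_def indicator_def)
    finally show ?thesis .
  qed
  then have "(\<integral>\<^sup>+x. indicator {0<..<a} x * W x * (\<integral>\<^sup>+t. indicator {0<..<x} t * h t \<partial>lborel) \<partial>lborel)
      = (\<integral>\<^sup>+x. \<integral>\<^sup>+t. T x t \<partial>lborel \<partial>lborel)"
    by simp
  also have "\<dots> = (\<integral>\<^sup>+t. \<integral>\<^sup>+x. T x t \<partial>lborel \<partial>lborel)"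
    unfolding T_def by (subst lborel_pair.Fubini') (auto simp: case_prod_unfold cong: measurable_cong_sets)
  also have "\<dots> = (\<integral>\<^sup>+t. indicator {0<..<a} t * h t * (\<integral>\<^sup>+x. indicator {t<..<a} x * W x \<partial>lborel) \<partial>lborel)"
  proof (intro nn_integral_cong)
    fix t
    have "(\<integral>\<^sup>+x. T x t \<partial>lborel)
        = (\<integral>\<^sup>+x. indicator {0<..<a} t * h t * (indicator {t<..<a} x * W x) \<partial>lborel)"
      by (intro nn_integral_cong) (auto simp: T_def indicator_def mult.commute)
    then show "(\<integral>\<^sup>+x. T x t \<partial>lborel)
        = indicator {0<..<a} t * h t * (\<integral>\<^sup>+x. indicator {t<..<a} x * W x \<partial>lborel)"
      by (simp add: nn_integral_cmult)
  qed
  finally show ?thesis .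
qed

lemma hardy_primitive_sq_le:
  fixes u v :: "real \<Rightarrow> real" and x q :: real and k :: nat
  assumes [measurable]: "v \<in> borel_measurable borel" and v0: "\<And>t. 0 \<le> v t" and x: "0 < x"
    and u0: "0 \<le> u x" and uv: "ennreal (u x) \<le> (\<integral>\<^sup>+t. indicator {0<..<x} t * ennreal (v t) \<partial>lborel)"
    and q: "q = real k + 1/2"
  shows "ennreal ((u x)^2 * x powr (-(2*k+2)))
    \<le> ennreal (x powr (-(q+1)) / q) * (\<integral>\<^sup>+t. indicator {0<..<x} t * ennreal (t powr (1/2 - k) * (v t)^2) \<partial>lborel)"
proof -
  define h where "h t = ennreal (t powr (1/2 - k) * (v t)^2)" for t
  have q_pos: "0 < q" by (simp add: q)
  have "ennreal (u x)^2 \<le> (\<integral>\<^sup>+t. indicator {0<..<x} t * ennreal (v t) \<partial>lborel)^2"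
    by (rule power_mono[OF uv]) simp
  also have "\<dots> \<le> ennreal (x powr q / q) * (\<integral>\<^sup>+t. indicator {0<..<x} t * h t \<partial>lborel)"
    using nn_integral_Ioo_Cauchy_Schwarz_powr[of v x "1/2 - k"] v0 x by (simp add: h_def q add.commute)
  finally have CS: "ennreal (u x)^2 \<le> ennreal (x powr q / q) * (\<integral>\<^sup>+t. indicator {0<..<x} t * h t \<partial>lborel)" .
  have "ennreal ((u x)^2 * x powr (-(2*k+2))) = ennreal (x powr (-(2*k+2))) * ennreal (u x)^2"
    using u0 by (simp add: ennreal_mult ennreal_power mult.commute)
  also have "\<dots> \<le> ennreal (x powr (-(2*k+2))) * (ennreal (x powr q / q) * (\<integral>\<^sup>+t. indicator {0<..<x} t * h t \<partial>lborel))"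
    by (rule mult_left_mono[OF CS]) simp
  also have "\<dots> = ennreal (x powr (-(2*k+2)) * (x powr q / q)) * (\<integral>\<^sup>+t. indicator {0<..<x} t * h t \<partial>lborel)"
    using q_pos by (subst ennreal_mult) (auto simp: mult.assoc)
  also have "x powr (-(2*k+2)) * (x powr q / q) = x powr (-(q+1)) / q"
  proof -
    have "x powr (-(2*k+2)) * x powr q = x powr (-(2*k+2) + q)" by (rule powr_add[symmetric])
    also have "-(2*k+2) + q = -(q+1)" by (simp add: q)
    finally show ?thesis by simp
  qed
  finally show ?thesis by (simp add: h_def)
qed

(* The inner integral over (t,a) produced by Tonelli misses the tail from a to infinity; that tail
   is the remainder term. *)
lemma hardy_inequality_remainder:
  fixes u v :: "real \<Rightarrow> real" and a :: real and k :: nat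
  assumes a: "0 < a" and [measurable]: "v \<in> borel_measurable borel"
    and v0: "\<And>t. 0 \<le> v t" and u0: "\<And>x. 0 \<le> u x"
    and uv: "\<And>x. 0 < x \<Longrightarrow> x < a \<Longrightarrow>
               ennreal (u x) \<le> (\<integral>\<^sup>+t. indicator {0<..<x} t * ennreal (v t) \<partial>lborel)"
  shows "(\<integral>\<^sup>+x. indicator {0<..<a} x * ennreal ((u x)^2 * x powr (-(2*k+2))) \<partial>lborel)
    + ennreal (a powr (-(k+1/2)) / (k+1/2)^2)
        * (\<integral>\<^sup>+t. indicator {0<..<a} t * ennreal (t powr (1/2 - k) * (v t)^2) \<partial>lborel)
    \<le> ennreal (1/(k+1/2)^2) * (\<integral>\<^sup>+t. indicator {0<..<a} t * ennreal ((v t)^2 * t powr (-2*k)) \<partial>lborel)"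
proof -
  define q :: real where "q = k + 1/2"
  have q: "0 < q" by (simp add: q_def)
  define h where "h t = ennreal (t powr (1/2 - k) * (v t)^2)" for t
  define W where "W x = ennreal (x powr (-(q+1)) / q)" for x :: real
  have [measurable]: "h \<in> borel_measurable borel" "W \<in> borel_measurable borel"
    unfolding h_def W_def by measurable
  have pointwise: "indicator {0<..<a} x * ennreal ((u x)^2 * x powr (-(2*k+2)))
      \<le> indicator {0<..<a} x * W x * (\<integral>\<^sup>+t. indicator {0<..<x} t * h t \<partial>lborel)" for x
  proof (cases "x \<in> {0<..<a}")
    case True
    then have x: "0 < x" "x < a" by auto
    then show ?thesis
      using hardy_primitive_sq_le[where u = u, OF assms(2) v0 x(1) u0 uv[OF x] q_def] by (simp add: W_def h_def mult.assoc)
  qed simp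
  have tail: "(\<integral>\<^sup>+x. indicator {t<..<a} x * W x \<partial>lborel) = ennreal ((t powr (-q) - a powr (-q)) / q^2)"
    if t: "0 < t" "t < a" for t
  proof -
    have "(\<integral>\<^sup>+x. indicator {t<..<a} x * W x \<partial>lborel)
        = (\<integral>\<^sup>+x. ennreal (1/q) * (indicator {t<..<a} x * ennreal (x powr (-(q+1)))) \<partial>lborel)"
    proof (intro nn_integral_cong)
      fix x :: real
      have "ennreal (x powr (-(q+1)) / q) = ennreal (1/q) * ennreal (x powr (-(q+1)))"
        using q by (subst ennreal_mult[symmetric]) auto
      then show "indicator {t<..<a} x * W x = ennreal (1/q) * (indicator {t<..<a} x * ennreal (x powr (-(q+1))))"
        by (simp add: W_def mult.left_commute)
    qed
    also have "\<dots> = ennreal (1/q) * ennreal ((t powr (-q) - a powr (-q)) / q)"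
      using nn_integral_powr_Ioo_tail[of "q+1" t a] t q by (simp add: nn_integral_cmult)
    also have "\<dots> = ennreal ((t powr (-q) - a powr (-q)) / q^2)"
      using t q powr_mono2'[of "-q" t a] by (simp add: ennreal_mult'[symmetric] power2_eq_square)
    finally show ?thesis .
  qed
  have "(\<integral>\<^sup>+x. indicator {0<..<a} x * ennreal ((u x)^2 * x powr (-(2*k+2))) \<partial>lborel)
      \<le> (\<integral>\<^sup>+x. indicator {0<..<a} x * W x * (\<integral>\<^sup>+t. indicator {0<..<x} t * h t \<partial>lborel) \<partial>lborel)"
    by (intro nn_integral_mono pointwise)
  also have "\<dots> = (\<integral>\<^sup>+t. indicator {0<..<a} t * h t * (\<integral>\<^sup>+x. indicator {t<..<a} x * W x \<partial>lborel) \<partial>lborel)"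
    by (rule nn_integral_Ioo_swap) measurable
  also have "\<dots> = (\<integral>\<^sup>+t. indicator {0<..<a} t * h t * ennreal ((t powr (-q) - a powr (-q)) / q^2) \<partial>lborel)"
    by (intro nn_integral_cong) (auto simp: tail split: split_indicator)
  finally have main: "(\<integral>\<^sup>+x. indicator {0<..<a} x * ennreal ((u x)^2 * x powr (-(2*k+2))) \<partial>lborel)
      \<le> (\<integral>\<^sup>+t. indicator {0<..<a} t * h t * ennreal ((t powr (-q) - a powr (-q)) / q^2) \<partial>lborel)" .
  have recombine: "indicator {0<..<a} t * h t * ennreal ((t powr (-q) - a powr (-q)) / q^2)
        + ennreal (a powr (-q) / q^2) * (indicator {0<..<a} t * h t)
      = ennreal (1/q^2) * (indicator {0<..<a} t * ennreal ((v t)^2 * t powr (-2*k)))" for t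
  proof (cases "t \<in> {0<..<a}")
    case True
    have "a powr (-q) \<le> t powr (-q)" using True q by (intro powr_mono2') auto
    then have sum: "ennreal ((t powr (-q) - a powr (-q)) / q^2) + ennreal (a powr (-q) / q^2)
        = ennreal (t powr (-q) / q^2)"
      by (subst ennreal_plus[symmetric]) (auto simp: diff_divide_distrib intro!: divide_right_mono)
    have "t powr (1/2 - k) * (v t)^2 * (t powr (-q) / q^2) = 1/q^2 * ((v t)^2 * t powr (-2*k))"
      using True by (simp add: q_def field_simps powr_add[symmetric])
    then have prod: "h t * ennreal (t powr (-q) / q^2) = ennreal (1/q^2) * ennreal ((v t)^2 * t powr (-2*k))"
      unfolding h_def by (subst ennreal_mult[symmetric], simp, simp)+ simp
    have "indicator {0<..<a} t * h t * ennreal ((t powr (-q) - a powr (-q)) / q^2)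
          + ennreal (a powr (-q) / q^2) * (indicator {0<..<a} t * h t)
        = h t * (ennreal ((t powr (-q) - a powr (-q)) / q^2) + ennreal (a powr (-q) / q^2))"
      using True by (simp add: algebra_simps)
    also have "\<dots> = ennreal (1/q^2) * ennreal ((v t)^2 * t powr (-2*k))"
      by (simp only: sum prod)
    finally show ?thesis using True by simp
  qed simp
  have combine: "(\<integral>\<^sup>+t. indicator {0<..<a} t * h t * ennreal ((t powr (-q) - a powr (-q)) / q^2) \<partial>lborel)
      + ennreal (a powr (-q) / q^2) * (\<integral>\<^sup>+t. indicator {0<..<a} t * h t \<partial>lborel)
    = ennreal (1/q^2) * (\<integral>\<^sup>+t. indicator {0<..<a} t * ennreal ((v t)^2 * t powr (-2*k)) \<partial>lborel)"
  proof -
    have "(\<integral>\<^sup>+t. indicator {0<..<a} t * h t * ennreal ((t powr (-q) - a powr (-q)) / q^2) \<partial>lborel)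
        + ennreal (a powr (-q) / q^2) * (\<integral>\<^sup>+t. indicator {0<..<a} t * h t \<partial>lborel)
      = (\<integral>\<^sup>+t. indicator {0<..<a} t * h t * ennreal ((t powr (-q) - a powr (-q)) / q^2)
          + ennreal (a powr (-q) / q^2) * (indicator {0<..<a} t * h t) \<partial>lborel)"
      by (subst nn_integral_add) (auto simp: nn_integral_cmult)
    also have "\<dots> = (\<integral>\<^sup>+t. ennreal (1/q^2) * (indicator {0<..<a} t * ennreal ((v t)^2 * t powr (-2*k))) \<partial>lborel)"
      by (intro nn_integral_cong recombine)
    also have "\<dots> = ennreal (1/q^2) * (\<integral>\<^sup>+t. indicator {0<..<a} t * ennreal ((v t)^2 * t powr (-2*k)) \<partial>lborel)"
      by (rule nn_integral_cmult) measurable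
    finally show ?thesis .
  qed
  have "(\<integral>\<^sup>+x. indicator {0<..<a} x * ennreal ((u x)^2 * x powr (-(2*k+2))) \<partial>lborel)
      + ennreal (a powr (-q) / q^2) * (\<integral>\<^sup>+t. indicator {0<..<a} t * h t \<partial>lborel)
    \<le> ennreal (1/q^2) * (\<integral>\<^sup>+t. indicator {0<..<a} t * ennreal ((v t)^2 * t powr (-2*k)) \<partial>lborel)"
    by (rule order_trans[OF add_right_mono[OF main]]) (simp only: combine)
  then show ?thesis unfolding q_def h_def .
qed

lemma hardy_inequality_remainder_lebesgue:
  fixes u v :: "real \<Rightarrow> real" and a :: real and k :: nat
  assumes a: "0 < a" and vm: "v \<in> borel_measurable lebesgue"
    and v0: "\<And>t. 0 \<le> v t" and u0: "\<And>x. 0 \<le> u x"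
    and uv: "\<And>x. 0 < x \<Longrightarrow> x < a \<Longrightarrow>
               ennreal (u x) \<le> (\<integral>\<^sup>+t. indicator {0<..<x} t * ennreal (v t) \<partial>lborel)"
  shows "(\<integral>\<^sup>+x. indicator {0<..<a} x * ennreal ((u x)^2 * x powr (-(2*k+2))) \<partial>lborel)
    + ennreal (a powr (-(k+1/2)) / (k+1/2)^2)
        * (\<integral>\<^sup>+t. indicator {0<..<a} t * ennreal (t powr (1/2 - k) * (v t)^2) \<partial>lborel)
    \<le> ennreal (1/(k+1/2)^2) * (\<integral>\<^sup>+t. indicator {0<..<a} t * ennreal ((v t)^2 * t powr (-2*k)) \<partial>lborel)"
proof -
  obtain v' where "v' \<in> borel_measurable lborel" and "AE x in lborel. v x = v' x"
    using completion_ex_borel_measurable_real[OF vm] by blast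
  define w where "w x = \<bar>v' x\<bar>" for x
  have [measurable]: "w \<in> borel_measurable borel"
    using \<open>v' \<in> borel_measurable lborel\<close> unfolding w_def by simp
  have ae: "AE x in lborel. v x = w x"
    using \<open>AE x in lborel. v x = v' x\<close> by eventually_elim (metis abs_of_nonneg v0 w_def)
  have "(\<integral>\<^sup>+x. indicator {0<..<a} x * ennreal ((u x)^2 * x powr (-(2*k+2))) \<partial>lborel)
    + ennreal (a powr (-(k+1/2)) / (k+1/2)^2)
        * (\<integral>\<^sup>+t. indicator {0<..<a} t * ennreal (t powr (1/2 - k) * (w t)^2) \<partial>lborel)
    \<le> ennreal (1/(k+1/2)^2) * (\<integral>\<^sup>+t. indicator {0<..<a} t * ennreal ((w t)^2 * t powr (-2*k)) \<partial>lborel)"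
  proof (rule hardy_inequality_remainder[OF a _ _ u0])
    fix x assume x: "0 < x" "x < a"
    have "(\<integral>\<^sup>+t. indicator {0<..<x} t * ennreal (v t) \<partial>lborel)
        = (\<integral>\<^sup>+t. indicator {0<..<x} t * ennreal (w t) \<partial>lborel)"
      by (intro nn_integral_cong_AE) (use ae in eventually_elim, simp)
    then show "ennreal (u x) \<le> (\<integral>\<^sup>+t. indicator {0<..<x} t * ennreal (w t) \<partial>lborel)"
      using uv[OF x] by simp
  next
    show "w \<in> borel_measurable borel" by measurable
  qed (simp add: w_def)
  moreover have "(\<integral>\<^sup>+t. indicator {0<..<a} t * ennreal (t powr (1/2 - k) * (w t)^2) \<partial>lborel)
     = (\<integral>\<^sup>+t. indicator {0<..<a} t * ennreal (t powr (1/2 - k) * (v t)^2) \<partial>lborel)"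
    "(\<integral>\<^sup>+t. indicator {0<..<a} t * ennreal ((w t)^2 * t powr (-2*k)) \<partial>lborel)
     = (\<integral>\<^sup>+t. indicator {0<..<a} t * ennreal ((v t)^2 * t powr (-2*k)) \<partial>lborel)"
    by (intro nn_integral_cong_AE; use ae in eventually_elim, simp)+
  ultimately show ?thesis by simp
qed

(* Only ever added locally: as a global measurable rule it derails the measurable method
   on goals over lborel. *)
lemma lebesgue_measurable_ident: "(\<lambda>x::real. x) \<in> borel_measurable lebesgue"
  by (intro measurable_completion) simp

definition hardy_chain :: "real \<Rightarrow> nat \<Rightarrow> (nat \<Rightarrow> real \<Rightarrow> real) \<Rightarrow> bool" where
  "hardy_chain a n w \<longleftrightarrow> (\<forall>j\<le>n. w j \<in> borel_measurable lebesgue) \<and> (\<forall>j t. 0 \<le> w j t) \<and>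
     (\<forall>j<n. \<forall>x. 0 < x \<and> x < a \<longrightarrow>
        ennreal (w j x) \<le> (\<integral>\<^sup>+t. indicator {0<..<x} t * ennreal (w (Suc j) t) \<partial>lborel))"

lemma hardy_chainD:
  assumes "hardy_chain a n w"
  shows "\<And>j. j \<le> n \<Longrightarrow> w j \<in> borel_measurable lebesgue" and "\<And>j t. 0 \<le> w j t"
    and "\<And>j x. j < n \<Longrightarrow> 0 < x \<Longrightarrow> x < a \<Longrightarrow>
      ennreal (w j x) \<le> (\<integral>\<^sup>+t. indicator {0<..<x} t * ennreal (w (Suc j) t) \<partial>lborel)"
  using assms unfolding hardy_chain_def by blast+

lemma hardy_chain_subinterval: "hardy_chain a n w \<Longrightarrow> a' \<le> a \<Longrightarrow> hardy_chain a' n w"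
  unfolding hardy_chain_def by auto

lemma ennreal_prod_hardy_Suc:
  "ennreal (1/(real m+1/2)^2) * ennreal (\<Prod>k<m. 1/(real k+1/2)^2) = ennreal (\<Prod>k<Suc m. 1/(real k+1/2)^2)"
  by (subst ennreal_mult[symmetric]) (auto simp: prod_nonneg mult.commute)

lemma hardy_inequality_iterated:
  fixes w :: "nat \<Rightarrow> real \<Rightarrow> real" and a :: real and n m :: nat
  assumes a: "0 < a" and w: "hardy_chain a n w" and m: "m \<le> n"
  shows "(\<integral>\<^sup>+x. indicator {0<..<a} x * ennreal ((w (n-m) x)^2 * x powr (-(2*real m))) \<partial>lborel)
     \<le> ennreal (\<Prod>k<m. 1/(real k+1/2)^2) * (\<integral>\<^sup>+x. indicator {0<..<a} x * ennreal ((w n x)^2) \<partial>lborel)"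
  using m
proof (induction m)
  case 0
  show ?case by (auto intro!: nn_integral_mono split: split_indicator)
next
  case (Suc m)
  note wm = hardy_chainD(1)[OF w] and w0 = hardy_chainD(2)[OF w] and hyp = hardy_chainD(3)[OF w]
  have m: "Suc (n - Suc m) = n - m" using Suc by simp
  have "(\<integral>\<^sup>+x. indicator {0<..<a} x * ennreal ((w (n - Suc m) x)^2 * x powr (-(2*m+2))) \<partial>lborel)
    + ennreal (a powr (-(m+1/2)) / (m+1/2)^2)
        * (\<integral>\<^sup>+t. indicator {0<..<a} t * ennreal (t powr (1/2 - m) * (w (Suc (n - Suc m)) t)^2) \<partial>lborel)
    \<le> ennreal (1/(m+1/2)^2)
        * (\<integral>\<^sup>+t. indicator {0<..<a} t * ennreal ((w (Suc (n - Suc m)) t)^2 * t powr (-2*m)) \<partial>lborel)"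
    by (rule hardy_inequality_remainder_lebesgue[OF a wm w0 w0 hyp]) (use Suc.prems in auto)
  then have "(\<integral>\<^sup>+x. indicator {0<..<a} x * ennreal ((w (n - Suc m) x)^2 * x powr (-(2*real (Suc m)))) \<partial>lborel)
      \<le> ennreal (1/(m+1/2)^2) * (\<integral>\<^sup>+t. indicator {0<..<a} t * ennreal ((w (n-m) t)^2 * t powr (-(2*real m))) \<partial>lborel)"
    unfolding m by (simp add: algebra_simps) (erule order_trans[rotated], simp)
  also have "\<dots> \<le> ennreal (1/(m+1/2)^2) * (ennreal (\<Prod>k<m. 1/(real k+1/2)^2)
      * (\<integral>\<^sup>+x. indicator {0<..<a} x * ennreal ((w n x)^2) \<partial>lborel))"
    using Suc by (intro mult_left_mono) auto
  finally show ?case by (simp only: mult.assoc[symmetric] ennreal_prod_hardy_Suc)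
qed

lemma hardy_inequality_iterated_remainder:
  fixes w :: "nat \<Rightarrow> real \<Rightarrow> real" and a :: real and n :: nat
  assumes a: "0 < a" and n: "1 \<le> n" and w: "hardy_chain a n w"
  shows "(\<integral>\<^sup>+x. indicator {0<..<a} x * ennreal ((w 0 x)^2 * x powr (-(2*real n))) \<partial>lborel)
     + ennreal (a powr (-(real (n-1)+1/2)) / (real (n-1)+1/2)^2)
         * (\<integral>\<^sup>+t. indicator {0<..<a} t * ennreal (t powr (1/2 - real (n-1)) * (w 1 t)^2) \<partial>lborel)
     \<le> ennreal (\<Prod>k<n. 1/(real k+1/2)^2) * (\<integral>\<^sup>+x. indicator {0<..<a} x * ennreal ((w n x)^2) \<partial>lborel)"
proof -
  note wm = hardy_chainD(1)[OF w] and w0 = hardy_chainD(2)[OF w] and hyp = hardy_chainD(3)[OF w]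
  define m where "m = n - 1"
  have nm: "n = Suc m" using n by (simp add: m_def)
  have "(\<integral>\<^sup>+x. indicator {0<..<a} x * ennreal ((w 0 x)^2 * x powr (-(2*real n))) \<partial>lborel)
     + ennreal (a powr (-(real (n-1)+1/2)) / (real (n-1)+1/2)^2)
         * (\<integral>\<^sup>+t. indicator {0<..<a} t * ennreal (t powr (1/2 - real (n-1)) * (w 1 t)^2) \<partial>lborel)
    \<le> ennreal (1/(m+1/2)^2) * (\<integral>\<^sup>+t. indicator {0<..<a} t * ennreal ((w (n-m) t)^2 * t powr (-(2*real m))) \<partial>lborel)"
  proof -
    have "(\<integral>\<^sup>+x. indicator {0<..<a} x * ennreal ((w 0 x)^2 * x powr (-(2*m+2))) \<partial>lborel)
      + ennreal (a powr (-(m+1/2)) / (m+1/2)^2)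
          * (\<integral>\<^sup>+t. indicator {0<..<a} t * ennreal (t powr (1/2 - m) * (w (Suc 0) t)^2) \<partial>lborel)
      \<le> ennreal (1/(m+1/2)^2) * (\<integral>\<^sup>+t. indicator {0<..<a} t * ennreal ((w (Suc 0) t)^2 * t powr (-2*m)) \<partial>lborel)"
      by (rule hardy_inequality_remainder_lebesgue[OF a wm w0 w0 hyp]) (use nm in auto)
    then show ?thesis by (simp add: nm algebra_simps)
  qed
  also have "\<dots> \<le> ennreal (1/(m+1/2)^2) * (ennreal (\<Prod>k<m. 1/(real k+1/2)^2)
      * (\<integral>\<^sup>+x. indicator {0<..<a} x * ennreal ((w n x)^2) \<partial>lborel))"
    using hardy_inequality_iterated[OF a w, of m] nm
    by (intro mult_left_mono) auto
  finally show ?thesis by (simp only: nm mult.assoc[symmetric] ennreal_prod_hardy_Suc)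
qed

lemma hardy_inequality_iterated_unweighted:
  fixes w :: "nat \<Rightarrow> real \<Rightarrow> real" and a :: real and n m :: nat
  assumes a: "0 < a" and w: "hardy_chain a n w" and m: "m \<le> n"
  shows "(\<integral>\<^sup>+x. indicator {0<..<a} x * ennreal ((w (n-m) x)^2) \<partial>lborel)
     \<le> ennreal (a powr (2*real m) * (\<Prod>k<m. 1/(real k+1/2)^2))
         * (\<integral>\<^sup>+x. indicator {0<..<a} x * ennreal ((w n x)^2) \<partial>lborel)"
proof -
  note lebesgue_measurable_ident[measurable]
  have [measurable]: "w (n-m) \<in> borel_measurable lebesgue" using hardy_chainD(1)[OF w] by simp
  have pointwise: "indicator {0<..<a} x * ennreal ((w (n-m) x)^2)
      \<le> ennreal (a powr (2*real m)) * (indicator {0<..<a} x * ennreal ((w (n-m) x)^2 * x powr (-(2*real m))))" for x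
  proof (cases "x \<in> {0<..<a}")
    case True
    have "(w (n-m) x)^2 = (w (n-m) x)^2 * (a powr (2*real m) * a powr (-(2*real m)))"
      using a by (simp add: powr_add[symmetric])
    also have "\<dots> \<le> (w (n-m) x)^2 * (a powr (2*real m) * x powr (-(2*real m)))"
      using True by (intro mult_left_mono powr_mono2') auto
    finally have "(w (n-m) x)^2 \<le> a powr (2*real m) * ((w (n-m) x)^2 * x powr (-(2*real m)))"
      by (simp only: mult_ac)
    then show ?thesis using True by (simp add: ennreal_mult[symmetric] ennreal_leI)
  qed simp
  have "(\<integral>\<^sup>+x. indicator {0<..<a} x * ennreal ((w (n-m) x)^2) \<partial>lborel)
      \<le> ennreal (a powr (2*real m))
          * (\<integral>\<^sup>+x. indicator {0<..<a} x * ennreal ((w (n-m) x)^2 * x powr (-(2*real m))) \<partial>lborel)"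
    (is "_ \<le> ennreal ?A * ?I")
  proof -
    have "(\<integral>\<^sup>+x. indicator {0<..<a} x * ennreal ((w (n-m) x)^2) \<partial>lborel)
        \<le> (\<integral>\<^sup>+x. ennreal ?A * (indicator {0<..<a} x * ennreal ((w (n-m) x)^2 * x powr (-(2*real m)))) \<partial>lebesgue)"
      unfolding nn_integral_completion by (intro nn_integral_mono pointwise)
    also have "\<dots> = ennreal ?A * (\<integral>\<^sup>+x. indicator {0<..<a} x * ennreal ((w (n-m) x)^2 * x powr (-(2*real m))) \<partial>lebesgue)"
      by (rule nn_integral_cmult) measurable
    finally show ?thesis by (simp add: nn_integral_completion)
  qed
  also have "\<dots> \<le> ennreal (a powr (2*real m)) * (ennreal (\<Prod>k<m. 1/(real k+1/2)^2)
      * (\<integral>\<^sup>+x. indicator {0<..<a} x * ennreal ((w n x)^2) \<partial>lborel))"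
    by (intro mult_left_mono hardy_inequality_iterated[OF a w m]) simp
  finally show ?thesis by (simp add: ennreal_mult prod_nonneg mult.assoc)
qed

section \<open>Absolutely continuous functions and reflection\<close>

lemma borel_measurable_lebesgueI: "f \<in> borel_measurable borel \<Longrightarrow> f \<in> borel_measurable lebesgue"
  by (rule measurable_completion) simp

lemma set_integrable_lebesgue_singleton:
  fixes f :: "real \<Rightarrow> 'a::{banach, second_countable_topology}"
  shows "set_integrable lebesgue {s} f"
proof -
  have "(\<lambda>x. indicator {s} x *\<^sub>R f x) = (\<lambda>x. indicator {s} x *\<^sub>R f s)"
    by (auto simp: indicator_def)
  then show ?thesis
    unfolding set_integrable_def
    by (simp add: integrable_indicator emeasure_completion emeasure_lborel_singleton)
qed

lemma set_integral_lebesgue_singleton: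
  fixes f :: "real \<Rightarrow> 'a::{banach, second_countable_topology}"
  shows "(LINT t:{s}|lebesgue. f t) = 0"
proof -
  have "(\<lambda>x. indicator {s} x *\<^sub>R f x) = (\<lambda>x. indicator {s} x *\<^sub>R f s)"
    by (auto simp: indicator_def)
  then show ?thesis
    unfolding set_lebesgue_integral_def
    by (simp add: emeasure_completion emeasure_lborel_singleton measure_def)
qed

lemma set_integrable_Icc_of_Ioo:
  fixes h :: "real \<Rightarrow> 'a::{banach, second_countable_topology}"
  assumes h: "set_integrable lebesgue {0<..<b} h" and y: "0 \<le> y" "y \<le> b"
  shows "set_integrable lebesgue {0..y} h"
proof -
  have "set_integrable lebesgue ({0<..<y} \<union> {0} \<union> {y}) h"
    by (intro set_integrable_Un set_integrable_subset[OF h] set_integrable_lebesgue_singleton)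
       (use y in auto)
  moreover have "{0..y} = {0<..<y} \<union> {0} \<union> {y}" using y by auto
  ultimately show ?thesis by simp
qed

lemma set_integral_Icc_eq_Ioo:
  fixes h :: "real \<Rightarrow> 'a::{banach, second_countable_topology}"
  assumes h: "set_integrable lebesgue {0<..<b} h" and y: "0 \<le> y" "y \<le> b"
  shows "(LINT t:{0..y}|lebesgue. h t) = (LINT t:{0<..<y}|lebesgue. h t)"
proof (cases "y = 0")
  case True
  then show ?thesis using set_integral_lebesgue_singleton[of 0 h] by (simp add: set_lebesgue_integral_def)
next
  case False
  have i1: "set_integrable lebesgue {0<..<y} h" by (rule set_integrable_subset[OF h]) (use y in auto)
  have i2: "set_integrable lebesgue ({0<..<y} \<union> {0}) h"
    by (rule set_integrable_Un[OF i1 set_integrable_lebesgue_singleton]) auto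
  have "{0..y} = {0<..<y} \<union> {0} \<union> {y}" using y by auto
  then have "(LINT t:{0..y}|lebesgue. h t)
      = (LINT t:{0<..<y} \<union> {0}|lebesgue. h t) + (LINT t:{y}|lebesgue. h t)"
    using False y by (simp only:) (rule set_integral_Un[OF _ i2 set_integrable_lebesgue_singleton], auto)
  also have "(LINT t:{0<..<y} \<union> {0}|lebesgue. h t) = (LINT t:{0<..<y}|lebesgue. h t) + (LINT t:{0}|lebesgue. h t)"
    by (rule set_integral_Un[OF _ i1 set_integrable_lebesgue_singleton]) auto
  finally show ?thesis by (simp add: set_integral_lebesgue_singleton)
qed

lemma norm_set_integral_le_nn_integral:
  fixes h :: "real \<Rightarrow> 'a::{banach, second_countable_topology}"
  assumes h: "set_integrable lebesgue S h"
  shows "ennreal (norm (LINT t:S|lebesgue. h t)) \<le> (\<integral>\<^sup>+t. indicator S t * ennreal (norm (h t)) \<partial>lborel)"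
proof -
  have int: "integrable lebesgue (\<lambda>t. norm (indicator S t *\<^sub>R h t))"
    using h unfolding set_integrable_def by (rule integrable_norm)
  have "norm (LINT t:S|lebesgue. h t) \<le> (LINT t:S|lebesgue. norm (h t))"
    by (rule set_integral_norm_bound[OF h])
  also have "(LINT t:S|lebesgue. norm (h t)) = (LINT t|lebesgue. norm (indicator S t *\<^sub>R h t))"
    unfolding set_lebesgue_integral_def
    by (intro Bochner_Integration.integral_cong) (auto simp: indicator_def)
  finally have "ennreal (norm (LINT t:S|lebesgue. h t)) \<le> ennreal (LINT t|lebesgue. norm (indicator S t *\<^sub>R h t))"
    by (rule ennreal_leI)
  also have "\<dots> = (\<integral>\<^sup>+t. ennreal (norm (indicator S t *\<^sub>R h t)) \<partial>lebesgue)"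
    by (rule nn_integral_eq_integral[OF int, symmetric]) auto
  also have "\<dots> = (\<integral>\<^sup>+t. indicator S t * ennreal (norm (h t)) \<partial>lborel)"
    by (simp add: nn_integral_completion) (intro nn_integral_cong, auto simp: indicator_def)
  finally show ?thesis .
qed

lemma continuous_on_integral_Ioo:
  fixes H :: "real \<Rightarrow> 'a::{banach, second_countable_topology}"
  assumes H: "integrable lebesgue H"
  shows "continuous_on UNIV (\<lambda>y. LINT t|lebesgue. indicator {0<..<y} t *\<^sub>R H t)"
proof -
  have Hm: "H \<in> borel_measurable lebesgue" using H by (rule borel_measurable_integrable)
  have "isCont (\<lambda>y. LINT t|lebesgue. indicator {0<..<y} t *\<^sub>R H t) y" for y
    unfolding continuous_at_sequentially comp_def
  proof (intro allI impI)
    fix X :: "nat \<Rightarrow> real" assume X: "X \<longlonglongrightarrow> y"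
    show "(\<lambda>i. LINT t|lebesgue. indicator {0<..<X i} t *\<^sub>R H t)
        \<longlonglongrightarrow> (LINT t|lebesgue. indicator {0<..<y} t *\<^sub>R H t)"
    proof (rule integral_dominated_convergence[where w = "\<lambda>t. norm (H t)"])
      have "AE t in lebesgue. t \<noteq> y \<and> t \<noteq> 0"
        by (intro AE_completion AE_conjI AE_lborel_singleton)
      then show "AE t in lebesgue. (\<lambda>i. indicator {0<..<X i} t *\<^sub>R H t) \<longlonglongrightarrow> indicator {0<..<y} t *\<^sub>R H t"
      proof eventually_elim
        case (elim t)
        show ?case
        proof (rule tendsto_eventually)
          consider "t < 0" | "0 < t" "t < y" | "y < t" "0 < t" using elim by linarith
          then show "\<forall>\<^sub>F i in sequentially. indicator {0<..<X i} t *\<^sub>R H t = indicator {0<..<y} t *\<^sub>R H t"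
          proof cases
            case 1 then show ?thesis by (auto simp: indicator_def)
          next
            case 2
            have "\<forall>\<^sub>F i in sequentially. t < X i" using order_tendstoD(1)[OF X 2(2)] .
            then show ?thesis by eventually_elim (use 2 in \<open>auto simp: indicator_def\<close>)
          next
            case 3
            have "\<forall>\<^sub>F i in sequentially. X i < t" using order_tendstoD(2)[OF X 3(1)] .
            then show ?thesis by eventually_elim (use 3 in \<open>auto simp: indicator_def\<close>)
          qed
        qed
      qed
      show "(\<lambda>t. indicator {0<..<y} t *\<^sub>R H t) \<in> borel_measurable lebesgue"
        by (intro borel_measurable_scaleR borel_measurable_indicator Hm) auto
      show "(\<lambda>t. indicator {0<..<X i} t *\<^sub>R H t) \<in> borel_measurable lebesgue" for i
        by (intro borel_measurable_scaleR borel_measurable_indicator Hm) auto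
    qed (use H in \<open>auto simp: indicator_def intro: integrable_norm\<close>)
  qed
  then show ?thesis by (simp add: continuous_at_imp_continuous_on)
qed

lemma AC_with_deriv_eq_integral:
  fixes h h' :: "real \<Rightarrow> 'a::{banach, second_countable_topology}"
  assumes ac: "AC_with_deriv b h h'" and y: "0 \<le> y" "y \<le> b"
  shows "h y = h 0 + (LINT t:{0<..<y}|lebesgue. h' t)"
proof -
  have "set_integrable lebesgue {0<..<b} h'" and "\<forall>x\<in>{0..b}. h x = h 0 + (LINT t:{0..x}|lebesgue. h' t)"
    using ac unfolding AC_with_deriv_def by blast+
  moreover have "y \<in> {0..b}" using y by simp
  ultimately show ?thesis using set_integral_Icc_eq_Ioo[of b h' y] y by (metis bspec)
qed

lemma AC_with_deriv_measurable:
  fixes h h' :: "real \<Rightarrow> 'a::{banach, second_countable_topology}"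
  assumes ac: "AC_with_deriv b h h'"
  shows "set_borel_measurable lebesgue {0<..<b} h"
proof -
  define H where "H t = indicator {0<..<b} t *\<^sub>R h' t" for t
  have "integrable lebesgue H" using ac unfolding H_def AC_with_deriv_def set_integrable_def by blast
  define G where "G y = (LINT t|lebesgue. indicator {0<..<y} t *\<^sub>R H t)" for y
  have Gm: "G \<in> borel_measurable lebesgue"
    unfolding G_def
    by (intro borel_measurable_lebesgueI borel_measurable_continuous_onI continuous_on_integral_Ioo
        \<open>integrable lebesgue H\<close>)
  have eq: "indicator {0<..<b} y *\<^sub>R h y = indicator {0<..<b} y *\<^sub>R (h 0 + G y)" for y
  proof (cases "y \<in> {0<..<b}")
    case True
    have "(LINT t:{0<..<y}|lebesgue. h' t) = G y"
      unfolding G_def H_def set_lebesgue_integral_def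
      by (intro Bochner_Integration.integral_cong) (use True in \<open>auto simp: indicator_def\<close>)
    then show ?thesis using AC_with_deriv_eq_integral[OF ac, of y] True by simp
  qed simp
  show ?thesis
    unfolding set_borel_measurable_def eq
    by (intro borel_measurable_scaleR borel_measurable_indicator borel_measurable_add Gm) auto
qed

lemma AC_with_deriv_norm_le_left:
  fixes h h' :: "real \<Rightarrow> 'a::{banach, second_countable_topology}"
  assumes ac: "AC_with_deriv b h h'" and h0: "h 0 = 0" and y: "0 < y" "y < b"
  shows "ennreal (norm (h y)) \<le> (\<integral>\<^sup>+t. indicator {0<..<y} t * ennreal (norm (h' t)) \<partial>lborel)"
proof -
  have "set_integrable lebesgue {0<..<b} h'" using ac unfolding AC_with_deriv_def by blast
  then have "set_integrable lebesgue {0<..<y} h'" by (rule set_integrable_subset) (use y in auto)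
  then show ?thesis
    using AC_with_deriv_eq_integral[OF ac, of y] y h0 norm_set_integral_le_nn_integral by simp
qed

lemma AC_with_deriv_norm_le_right:
  fixes h h' :: "real \<Rightarrow> 'a::{banach, second_countable_topology}"
  assumes ac: "AC_with_deriv b h h'" and hb: "h b = 0" and y: "0 < y" "y < b"
  shows "ennreal (norm (h y)) \<le> (\<integral>\<^sup>+t. indicator {y<..<b} t * ennreal (norm (h' t)) \<partial>lborel)"
proof -
  have i: "set_integrable lebesgue {0<..<b} h'" using ac unfolding AC_with_deriv_def by blast
  have i1: "set_integrable lebesgue {0<..<y} h'" by (rule set_integrable_subset[OF i]) (use y in auto)
  have i2: "set_integrable lebesgue {y<..<b} h'" by (rule set_integrable_subset[OF i]) (use y in auto)
  have i12: "set_integrable lebesgue ({0<..<y} \<union> {y}) h'"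
    by (rule set_integrable_Un[OF i1 set_integrable_lebesgue_singleton]) auto
  have eq: "{0<..<b} = ({0<..<y} \<union> {y}) \<union> {y<..<b}" using y by auto
  have "(LINT t:{0<..<b}|lebesgue. h' t)
      = (LINT t:{0<..<y}|lebesgue. h' t) + (LINT t:{y}|lebesgue. h' t) + (LINT t:{y<..<b}|lebesgue. h' t)"
    unfolding eq
    by (subst set_integral_Un[OF _ i12 i2], force, subst set_integral_Un[OF _ i1 set_integrable_lebesgue_singleton]) auto
  then have "(LINT t:{0<..<b}|lebesgue. h' t) = (LINT t:{0<..<y}|lebesgue. h' t) + (LINT t:{y<..<b}|lebesgue. h' t)"
    by (simp add: set_integral_lebesgue_singleton)
  then have "h y = h b - (LINT t:{y<..<b}|lebesgue. h' t)"
    using AC_with_deriv_eq_integral[OF ac, of y] AC_with_deriv_eq_integral[OF ac, of b] y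
    by (simp add: algebra_simps)
  then show ?thesis using norm_set_integral_le_nn_integral[OF i2] hb by simp
qed

lemma lebesgue_measurable_reflect:
  "f \<in> borel_measurable lebesgue \<Longrightarrow> (\<lambda>x::real. f (b - x)) \<in> borel_measurable lebesgue"
  using lebesgue_affine_measurable[where c="\<lambda>_. -1::real" and t=b]
  by (auto intro: measurable_compose)

lemma nn_integral_lborel_reflect:
  fixes F :: "real \<Rightarrow> ennreal"
  assumes "F \<in> borel_measurable lebesgue"
  shows "(\<integral>\<^sup>+x. F x \<partial>lborel) = (\<integral>\<^sup>+x. F (b - x) \<partial>lborel)"
  using nn_integral_real_affine_lebesgue[OF assms, of "-1" b] by (simp add: nn_integral_completion)

lemma nn_integral_Ioo_split_reflect:
  fixes F :: "real \<Rightarrow> real"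
  assumes [measurable]: "F \<in> borel_measurable lebesgue" and b: "0 < b"
  shows "(\<integral>\<^sup>+ x\<in>{0<..<b}. ennreal (F x) \<partial>lebesgue)
    = (\<integral>\<^sup>+x. indicator {0<..<b/2} x * ennreal (F x) \<partial>lborel)
      + (\<integral>\<^sup>+x. indicator {0<..<b/2} x * ennreal (F (b - x)) \<partial>lborel)"
proof -
  note lebesgue_measurable_ident[measurable]
  have "AE x in lebesgue. x \<noteq> b/2" by (intro AE_completion AE_lborel_singleton)
  then have "AE x in lebesgue. ennreal (F x) * indicator {0<..<b} x
      = indicator {0<..<b/2} x * ennreal (F x) + indicator {b/2<..<b} x * ennreal (F x)"
  proof eventually_elim
    case (elim x)
    then consider "x \<in> {0<..<b/2}" | "x \<in> {b/2<..<b}" | "x \<notin> {0<..<b}" by force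
    then show ?case by cases (use b in \<open>auto simp: indicator_def\<close>)
  qed
  then have "(\<integral>\<^sup>+ x\<in>{0<..<b}. ennreal (F x) \<partial>lebesgue)
      = (\<integral>\<^sup>+x. indicator {0<..<b/2} x * ennreal (F x) + indicator {b/2<..<b} x * ennreal (F x) \<partial>lebesgue)"
    by (rule nn_integral_cong_AE)
  also have "\<dots> = (\<integral>\<^sup>+x. indicator {0<..<b/2} x * ennreal (F x) \<partial>lebesgue)
      + (\<integral>\<^sup>+x. indicator {b/2<..<b} x * ennreal (F x) \<partial>lebesgue)"
    by (rule nn_integral_add) measurable
  also have "\<dots> = (\<integral>\<^sup>+x. indicator {0<..<b/2} x * ennreal (F x) \<partial>lborel)
      + (\<integral>\<^sup>+x. indicator {b/2<..<b} x * ennreal (F x) \<partial>lborel)"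
    by (simp add: nn_integral_completion)
  also have "(\<integral>\<^sup>+x. indicator {b/2<..<b} x * ennreal (F x) \<partial>lborel)
      = (\<integral>\<^sup>+x. indicator {b/2<..<b} (b - x) * ennreal (F (b - x)) \<partial>lborel)"
    by (rule nn_integral_lborel_reflect) measurable
  also have "\<dots> = (\<integral>\<^sup>+x. indicator {0<..<b/2} x * ennreal (F (b - x)) \<partial>lborel)"
    by (intro nn_integral_cong) (auto simp: indicator_def)
  finally show ?thesis .
qed

section \<open>Derivative chains\<close>

definition norm_on_Ioo :: "real \<Rightarrow> (real \<Rightarrow> 'a::real_normed_vector) \<Rightarrow> real \<Rightarrow> real" where
  "norm_on_Ioo b h t = norm (indicator {0<..<b} t *\<^sub>R h t)"

lemma norm_on_Ioo_eq [simp]: "t \<in> {0<..<b} \<Longrightarrow> norm_on_Ioo b h t = norm (h t)"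
  by (simp add: norm_on_Ioo_def)

lemma norm_on_Ioo_measurable:
  fixes h :: "real \<Rightarrow> 'a::{banach, second_countable_topology}"
  assumes "set_borel_measurable lebesgue {0<..<b} h"
  shows "norm_on_Ioo b h \<in> borel_measurable lebesgue"
  using assms unfolding norm_on_Ioo_def set_borel_measurable_def by measurable

lemma deriv_chain_set_borel_measurable:
  fixes g :: "nat \<Rightarrow> real \<Rightarrow> 'a::{banach, second_countable_topology}"
  assumes ch: "deriv_chain b n f g" and gn: "set_borel_measurable lebesgue {0<..<b} (g n)" and j: "j \<le> n"
  shows "set_borel_measurable lebesgue {0<..<b} (g j)"
proof (cases "j = n")
  case False
  then have "AC_with_deriv b (g j) (g (Suc j))" using ch j by (simp add: deriv_chain_def)
  then show ?thesis by (rule AC_with_deriv_measurable)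
qed (use gn in simp)

lemma deriv_chain_hardy_chain_left:
  fixes g :: "nat \<Rightarrow> real \<Rightarrow> 'a::{banach, second_countable_topology}"
  assumes ch: "deriv_chain b n f g" and gn: "set_borel_measurable lebesgue {0<..<b} (g n)"
  shows "hardy_chain b n (\<lambda>j. norm_on_Ioo b (g j))"
  unfolding hardy_chain_def
proof (intro conjI allI impI)
  show "norm_on_Ioo b (g j) \<in> borel_measurable lebesgue" if "j \<le> n" for j
    by (intro norm_on_Ioo_measurable deriv_chain_set_borel_measurable[OF ch gn that])
  show "0 \<le> norm_on_Ioo b (g j) t" for j t by (simp add: norm_on_Ioo_def)
  fix j x assume j: "j < n" and x: "0 < x \<and> x < b"
  have "AC_with_deriv b (g j) (g (Suc j))" "g j 0 = 0" using ch j by (auto simp: deriv_chain_def)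
  then have "ennreal (norm (g j x)) \<le> (\<integral>\<^sup>+t. indicator {0<..<x} t * ennreal (norm (g (Suc j) t)) \<partial>lborel)"
    using x by (intro AC_with_deriv_norm_le_left) auto
  also have "\<dots> = (\<integral>\<^sup>+t. indicator {0<..<x} t * ennreal (norm_on_Ioo b (g (Suc j)) t) \<partial>lborel)"
    using x by (intro nn_integral_cong) (auto split: split_indicator)
  finally show "ennreal (norm_on_Ioo b (g j) x)
      \<le> (\<integral>\<^sup>+t. indicator {0<..<x} t * ennreal (norm_on_Ioo b (g (Suc j)) t) \<partial>lborel)"
    using x by simp
qed

lemma deriv_chain_hardy_chain_right:
  fixes g :: "nat \<Rightarrow> real \<Rightarrow> 'a::{banach, second_countable_topology}"
  assumes ch: "deriv_chain b n f g" and gn: "set_borel_measurable lebesgue {0<..<b} (g n)"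
  shows "hardy_chain b n (\<lambda>j t. norm_on_Ioo b (g j) (b - t))"
  unfolding hardy_chain_def
proof (intro conjI allI impI)
  have meas: "norm_on_Ioo b (g j) \<in> borel_measurable lebesgue" if "j \<le> n" for j
    by (intro norm_on_Ioo_measurable deriv_chain_set_borel_measurable[OF ch gn that])
  then show "(\<lambda>t. norm_on_Ioo b (g j) (b - t)) \<in> borel_measurable lebesgue" if "j \<le> n" for j
    using that by (intro lebesgue_measurable_reflect)
  show "0 \<le> norm_on_Ioo b (g j) (b - t)" for j t by (simp add: norm_on_Ioo_def)
  fix j x assume j: "j < n" and x: "0 < x \<and> x < b"
  note lebesgue_measurable_ident[measurable]
  have [measurable]: "norm_on_Ioo b (g (Suc j)) \<in> borel_measurable lebesgue" using meas j by simp
  have "AC_with_deriv b (g j) (g (Suc j))" "g j b = 0" using ch j by (auto simp: deriv_chain_def)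
  then have "ennreal (norm (g j (b - x)))
      \<le> (\<integral>\<^sup>+t. indicator {b-x<..<b} t * ennreal (norm (g (Suc j) t)) \<partial>lborel)"
    using x by (intro AC_with_deriv_norm_le_right) auto
  also have "\<dots> = (\<integral>\<^sup>+t. indicator {b-x<..<b} t * ennreal (norm_on_Ioo b (g (Suc j)) t) \<partial>lborel)"
    using x by (intro nn_integral_cong) (auto split: split_indicator)
  also have "\<dots> = (\<integral>\<^sup>+t. indicator {b-x<..<b} (b - t) * ennreal (norm_on_Ioo b (g (Suc j)) (b - t)) \<partial>lborel)"
    by (rule nn_integral_lborel_reflect) measurable
  also have "\<dots> = (\<integral>\<^sup>+t. indicator {0<..<x} t * ennreal (norm_on_Ioo b (g (Suc j)) (b - t)) \<partial>lborel)"
    by (intro nn_integral_cong) (auto split: split_indicator)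
  finally show "ennreal (norm_on_Ioo b (g j) (b - x))
      \<le> (\<integral>\<^sup>+t. indicator {0<..<x} t * ennreal (norm_on_Ioo b (g (Suc j)) (b - t)) \<partial>lborel)"
    using x by simp
qed

lemma nn_integral_norm_sq_split:
  fixes h :: "real \<Rightarrow> 'a::{banach, second_countable_topology}"
  assumes b: "0 < b" and h: "set_borel_measurable lebesgue {0<..<b} h"
  shows "(\<integral>\<^sup>+ x\<in>{0<..<b}. ennreal ((norm (h x))\<^sup>2) \<partial>lebesgue)
    = (\<integral>\<^sup>+x. indicator {0<..<b/2} x * ennreal ((norm_on_Ioo b h x)^2) \<partial>lborel)
      + (\<integral>\<^sup>+x. indicator {0<..<b/2} x * ennreal ((norm_on_Ioo b h (b - x))^2) \<partial>lborel)"
proof -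
  have [measurable]: "norm_on_Ioo b h \<in> borel_measurable lebesgue" by (rule norm_on_Ioo_measurable[OF h])
  have "(\<integral>\<^sup>+ x\<in>{0<..<b}. ennreal ((norm (h x))\<^sup>2) \<partial>lebesgue)
      = (\<integral>\<^sup>+ x\<in>{0<..<b}. ennreal ((norm_on_Ioo b h x)\<^sup>2) \<partial>lebesgue)"
    by (intro nn_integral_cong) (auto split: split_indicator)
  also have "\<dots> = (\<integral>\<^sup>+x. indicator {0<..<b/2} x * ennreal ((norm_on_Ioo b h x)^2) \<partial>lborel)
      + (\<integral>\<^sup>+x. indicator {0<..<b/2} x * ennreal ((norm_on_Ioo b h (b - x))^2) \<partial>lborel)"
    by (rule nn_integral_Ioo_split_reflect[OF _ b]) measurable
  finally show ?thesis .
qed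

lemma nn_integral_dist_bd_split:
  fixes f h :: "real \<Rightarrow> 'a::{banach, second_countable_topology}"
  assumes b: "0 < b" and h: "set_borel_measurable lebesgue {0<..<b} h"
    and fh: "\<And>x. x \<in> {0<..<b} \<Longrightarrow> f x = h x"
  shows "(\<integral>\<^sup>+ x\<in>{0<..<b}. ennreal ((norm (f x))\<^sup>2 / (dist_bd b x) ^ (2 * n)) \<partial>lebesgue)
    = (\<integral>\<^sup>+x. indicator {0<..<b/2} x * ennreal ((norm_on_Ioo b h x)^2 * x powr (-(2*real n))) \<partial>lborel)
      + (\<integral>\<^sup>+x. indicator {0<..<b/2} x * ennreal ((norm_on_Ioo b h (b - x))^2 * x powr (-(2*real n))) \<partial>lborel)"
proof -
  note lebesgue_measurable_ident[measurable]
  have [measurable]: "norm_on_Ioo b h \<in> borel_measurable lebesgue" by (rule norm_on_Ioo_measurable[OF h])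
  define F where "F x = (norm_on_Ioo b h x)^2 / dist_bd b x ^ (2*n)" for x
  have [measurable]: "F \<in> borel_measurable lebesgue" unfolding F_def dist_bd_def by measurable
  have powr_eq: "y / x ^ (2*n) = y * x powr (-(2*real n))" if "0 < x" for x y :: real
    using that powr_realpow[of x "2*n"] by (simp add: powr_minus divide_inverse)
  have "(\<integral>\<^sup>+ x\<in>{0<..<b}. ennreal ((norm (f x))\<^sup>2 / (dist_bd b x) ^ (2 * n)) \<partial>lebesgue)
      = (\<integral>\<^sup>+ x\<in>{0<..<b}. ennreal (F x) \<partial>lebesgue)"
    by (intro nn_integral_cong) (auto simp: F_def fh split: split_indicator)
  also have "\<dots> = (\<integral>\<^sup>+x. indicator {0<..<b/2} x * ennreal (F x) \<partial>lborel)
      + (\<integral>\<^sup>+x. indicator {0<..<b/2} x * ennreal (F (b - x)) \<partial>lborel)"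
    by (rule nn_integral_Ioo_split_reflect) (use b in auto)
  also have "\<dots> = (\<integral>\<^sup>+x. indicator {0<..<b/2} x * ennreal ((norm_on_Ioo b h x)^2 * x powr (-(2*real n))) \<partial>lborel)
      + (\<integral>\<^sup>+x. indicator {0<..<b/2} x * ennreal ((norm_on_Ioo b h (b - x))^2 * x powr (-(2*real n))) \<partial>lborel)"
    by (intro arg_cong2[where f="(+)"] nn_integral_cong)
       (auto simp: F_def dist_bd_def powr_eq split: split_indicator)
  finally show ?thesis .
qed

section \<open>Equivalence of the two Sobolev spaces\<close>

lemma deriv_chain_nn_integral_sq_le:
  fixes g :: "nat \<Rightarrow> real \<Rightarrow> 'a::{banach, second_countable_topology}"
  assumes b: "0 < b" and ch: "deriv_chain b n f g" and gn: "set_borel_measurable lebesgue {0<..<b} (g n)"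
    and k: "k \<le> n"
  shows "(\<integral>\<^sup>+ x\<in>{0<..<b}. ennreal ((norm (g k x))\<^sup>2) \<partial>lebesgue)
     \<le> ennreal ((b/2) powr (2*real (n-k)) * (\<Prod>j<n-k. 1/(real j+1/2)^2))
         * (\<integral>\<^sup>+ x\<in>{0<..<b}. ennreal ((norm (g n x))\<^sup>2) \<partial>lebesgue)"
proof -
  define K where "K = ennreal ((b/2) powr (2*real (n-k)) * (\<Prod>j<n-k. 1/(real j+1/2)^2))"
  have left: "hardy_chain (b/2) n (\<lambda>j. norm_on_Ioo b (g j))"
    by (rule hardy_chain_subinterval[OF deriv_chain_hardy_chain_left[OF ch gn]]) (use b in simp)
  have right: "hardy_chain (b/2) n (\<lambda>j t. norm_on_Ioo b (g j) (b - t))"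
    by (rule hardy_chain_subinterval[OF deriv_chain_hardy_chain_right[OF ch gn]]) (use b in simp)
  have gk: "set_borel_measurable lebesgue {0<..<b} (g k)"
    by (rule deriv_chain_set_borel_measurable[OF ch gn k])
  have "(\<integral>\<^sup>+ x\<in>{0<..<b}. ennreal ((norm (g k x))\<^sup>2) \<partial>lebesgue)
      = (\<integral>\<^sup>+x. indicator {0<..<b/2} x * ennreal ((norm_on_Ioo b (g k) x)^2) \<partial>lborel)
        + (\<integral>\<^sup>+x. indicator {0<..<b/2} x * ennreal ((norm_on_Ioo b (g k) (b - x))^2) \<partial>lborel)"
    by (rule nn_integral_norm_sq_split[OF b gk])
  also have "\<dots> \<le> K * (\<integral>\<^sup>+x. indicator {0<..<b/2} x * ennreal ((norm_on_Ioo b (g n) x)^2) \<partial>lborel)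
        + K * (\<integral>\<^sup>+x. indicator {0<..<b/2} x * ennreal ((norm_on_Ioo b (g n) (b - x))^2) \<partial>lborel)"
    using hardy_inequality_iterated_unweighted[OF _ left, of "n - k"]
      hardy_inequality_iterated_unweighted[OF _ right, of "n - k"] b k
    by (intro add_mono) (simp_all add: K_def)
  also have "\<dots> = K * (\<integral>\<^sup>+ x\<in>{0<..<b}. ennreal ((norm (g n x))\<^sup>2) \<partial>lebesgue)"
    by (simp add: nn_integral_norm_sq_split[OF b gn] distrib_left)
  finally show ?thesis unfolding K_def .
qed

lemma set_integral_norm_sq_eq_nn_integral:
  fixes h :: "real \<Rightarrow> 'a::{banach, second_countable_topology}"
  assumes "set_integrable lebesgue {0<..<b} (\<lambda>x. (norm (h x))\<^sup>2)"
  shows "ennreal (LINT x:{0<..<b}|lebesgue. (norm (h x))\<^sup>2)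
       = (\<integral>\<^sup>+ x\<in>{0<..<b}. ennreal ((norm (h x))\<^sup>2) \<partial>lebesgue)"
proof -
  have i: "integrable lebesgue (\<lambda>x. indicator {0<..<b} x *\<^sub>R (norm (h x))\<^sup>2)"
    using assms by (simp add: set_integrable_def)
  have "(\<integral>\<^sup>+x. ennreal (indicator {0<..<b} x *\<^sub>R (norm (h x))\<^sup>2) \<partial>lebesgue)
      = ennreal (LINT x|lebesgue. indicator {0<..<b} x *\<^sub>R (norm (h x))\<^sup>2)"
    by (rule nn_integral_eq_integral[OF i]) auto
  moreover have "(\<integral>\<^sup>+x. ennreal (indicator {0<..<b} x *\<^sub>R (norm (h x))\<^sup>2) \<partial>lebesgue)
      = (\<integral>\<^sup>+ x\<in>{0<..<b}. ennreal ((norm (h x))\<^sup>2) \<partial>lebesgue)"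
    by (intro nn_integral_cong) (auto simp: indicator_def)
  ultimately show ?thesis by (simp add: set_lebesgue_integral_def)
qed

lemma L2_on_iff_nn_integral_finite:
  fixes h :: "real \<Rightarrow> 'a::{banach, second_countable_topology}"
  assumes h: "set_borel_measurable lebesgue {0<..<b} h"
  shows "L2_on b h \<longleftrightarrow> (\<integral>\<^sup>+ x\<in>{0<..<b}. ennreal ((norm (h x))\<^sup>2) \<partial>lebesgue) < \<infinity>"
proof -
  have [measurable]: "(\<lambda>x. indicator {0<..<b} x *\<^sub>R h x) \<in> borel_measurable lebesgue"
    using h unfolding set_borel_measurable_def .
  have eq: "(\<lambda>x. indicator {0<..<b} x *\<^sub>R (norm (h x))\<^sup>2) = (\<lambda>x. (norm (indicator {0<..<b} x *\<^sub>R h x))\<^sup>2)"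
    by (auto simp: indicator_def fun_eq_iff)
  have m: "(\<lambda>x. indicator {0<..<b} x *\<^sub>R (norm (h x))\<^sup>2) \<in> borel_measurable lebesgue"
    unfolding eq by measurable
  have "L2_on b h \<longleftrightarrow> integrable lebesgue (\<lambda>x. indicator {0<..<b} x *\<^sub>R (norm (h x))\<^sup>2)"
    using h by (simp add: L2_on_def set_integrable_def)
  also have "\<dots> \<longleftrightarrow> (\<integral>\<^sup>+x. ennreal (norm (indicator {0<..<b} x *\<^sub>R (norm (h x))\<^sup>2)) \<partial>lebesgue) < \<infinity>"
    using m by (simp add: integrable_iff_bounded)
  also have "(\<integral>\<^sup>+x. ennreal (norm (indicator {0<..<b} x *\<^sub>R (norm (h x))\<^sup>2)) \<partial>lebesgue)
      = (\<integral>\<^sup>+ x\<in>{0<..<b}. ennreal ((norm (h x))\<^sup>2) \<partial>lebesgue)"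
    by (intro nn_integral_cong) (auto simp: indicator_def)
  finally show ?thesis .
qed

lemma L2_on_deriv_chain:
  fixes g :: "nat \<Rightarrow> real \<Rightarrow> 'a::{banach, second_countable_topology}"
  assumes b: "0 < b" and ch: "deriv_chain b n f g" and L2n: "L2_on b (g n)" and k: "k \<le> n"
  shows "L2_on b (g k)"
proof -
  have gn: "set_borel_measurable lebesgue {0<..<b} (g n)" using L2n by (simp add: L2_on_def)
  have gk: "set_borel_measurable lebesgue {0<..<b} (g k)"
    by (rule deriv_chain_set_borel_measurable[OF ch gn k])
  have "(\<integral>\<^sup>+ x\<in>{0<..<b}. ennreal ((norm (g n x))\<^sup>2) \<partial>lebesgue) < \<infinity>"
    using L2n L2_on_iff_nn_integral_finite[OF gn] by simp
  then have "(\<integral>\<^sup>+ x\<in>{0<..<b}. ennreal ((norm (g k x))\<^sup>2) \<partial>lebesgue) < \<infinity>"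
    using deriv_chain_nn_integral_sq_le[OF b ch gn k]
    by (simp add: ennreal_mult_less_top order_le_less_trans)
  then show ?thesis using L2_on_iff_nn_integral_finite[OF gk] by simp
qed

lemma deriv_chain_integral_sq_le:
  fixes g :: "nat \<Rightarrow> real \<Rightarrow> 'a::{banach, second_countable_topology}"
  assumes b: "0 < b" and ch: "deriv_chain b n f g" and L2n: "L2_on b (g n)" and k: "k \<le> n"
  shows "(LINT x:{0<..<b}|lebesgue. (norm (g k x))\<^sup>2)
     \<le> ((b/2) powr (2*real (n-k)) * (\<Prod>j<n-k. 1/(real j+1/2)^2)) * (LINT x:{0<..<b}|lebesgue. (norm (g n x))\<^sup>2)"
proof -
  define K where "K = (b/2) powr (2*real (n-k)) * (\<Prod>j<n-k. 1/(real j+1/2)^2)"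
  have K: "0 \<le> K" unfolding K_def by (intro mult_nonneg_nonneg prod_nonneg) auto
  have ik: "set_integrable lebesgue {0<..<b} (\<lambda>x. (norm (g k x))\<^sup>2)"
    using L2_on_deriv_chain[OF b ch L2n k] by (simp add: L2_on_def)
  have inn: "set_integrable lebesgue {0<..<b} (\<lambda>x. (norm (g n x))\<^sup>2)" using L2n by (simp add: L2_on_def)
  have nn: "0 \<le> (LINT x:{0<..<b}|lebesgue. (norm (g n x))\<^sup>2)"
    unfolding set_lebesgue_integral_def by (rule Bochner_Integration.integral_nonneg) auto
  have gn: "set_borel_measurable lebesgue {0<..<b} (g n)" using L2n by (simp add: L2_on_def)
  have "ennreal (LINT x:{0<..<b}|lebesgue. (norm (g k x))\<^sup>2)
      \<le> ennreal K * ennreal (LINT x:{0<..<b}|lebesgue. (norm (g n x))\<^sup>2)"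
    using deriv_chain_nn_integral_sq_le[OF b ch gn k]
    unfolding set_integral_norm_sq_eq_nn_integral[OF ik] set_integral_norm_sq_eq_nn_integral[OF inn] K_def .
  also have "\<dots> = ennreal (K * (LINT x:{0<..<b}|lebesgue. (norm (g n x))\<^sup>2))"
    by (rule ennreal_mult[OF K nn, symmetric])
  finally have "ennreal (LINT x:{0<..<b}|lebesgue. (norm (g k x))\<^sup>2)
      \<le> ennreal (K * (LINT x:{0<..<b}|lebesgue. (norm (g n x))\<^sup>2))" .
  then show ?thesis unfolding K_def[symmetric] using K nn by (simp add: ennreal_le_iff)
qed

lemma H_n_eq_H0_n:
  assumes "0 < b"
  shows "H_n b n = (H0_n b n :: (real \<Rightarrow> 'a::{banach, second_countable_topology}) set)"
  using L2_on_deriv_chain[OF assms] unfolding H_n_def H0_n_def by blast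

lemma sobolev_norm_equivalent:
  assumes b: "0 < b"
  shows "\<exists>c1 c2. 0 < c1 \<and> 0 < c2 \<and>
         (\<forall>(f :: real \<Rightarrow> 'a::{banach, second_countable_topology}) g.
            deriv_chain b n f g \<and> (\<forall>k\<le>n. L2_on b (g k)) \<longrightarrow>
            c1 * sobolev_norm b n g \<le> L2_norm_on b (g n) \<and>
            L2_norm_on b (g n) \<le> c2 * sobolev_norm b n g)"
proof -
  define K where "K k = (b/2) powr (2*real (n-k)) * (\<Prod>j<n-k. 1/(real j+1/2)^2)" for k
  define S where "S = (\<Sum>k\<le>n. K k)"
  have Knn: "0 \<le> K k" for k unfolding K_def by (intro mult_nonneg_nonneg prod_nonneg) auto
  have "K n = 1" using b by (simp add: K_def)
  then have S: "1 \<le> S" unfolding S_def using member_le_sum[of n "{..n}" K] Knn by simp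
  show ?thesis
  proof (intro exI conjI allI impI)
    show "0 < 1 / sqrt S" "(0::real) < 1" using S by simp_all
    fix f :: "real \<Rightarrow> 'a" and g
    assume "deriv_chain b n f g \<and> (\<forall>k\<le>n. L2_on b (g k))"
    then have ch: "deriv_chain b n f g" and L2n: "L2_on b (g n)" by auto
    define I where "I k = (LINT x:{0<..<b}|lebesgue. (norm (g k x))\<^sup>2)" for k
    have Inn: "0 \<le> I k" for k
      unfolding I_def set_lebesgue_integral_def by (rule Bochner_Integration.integral_nonneg) auto
    have sob: "sobolev_norm b n g = sqrt (\<Sum>k\<le>n. I k)" and L2n_eq: "L2_norm_on b (g n) = sqrt (I n)"
      unfolding sobolev_norm_def L2_norm_on_def I_def using Inn[unfolded I_def] by simp_all
    have "(\<Sum>k\<le>n. I k) \<le> (\<Sum>k\<le>n. K k * I n)"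
      unfolding I_def K_def by (intro sum_mono deriv_chain_integral_sq_le[OF b ch L2n]) simp
    also have "\<dots> = S * I n" by (simp add: S_def sum_distrib_right)
    finally have "sqrt (\<Sum>k\<le>n. I k) \<le> sqrt S * sqrt (I n)" by (simp add: real_sqrt_mult[symmetric])
    then show "1 / sqrt S * sobolev_norm b n g \<le> L2_norm_on b (g n)"
      using S by (simp add: sob L2n_eq field_simps)
    have "I n \<le> (\<Sum>k\<le>n. I k)" using member_le_sum[of n "{..n}" I] Inn by simp
    then show "L2_norm_on b (g n) \<le> 1 * sobolev_norm b n g" by (simp add: sob L2n_eq)
  qed
qed

section \<open>The strict Hardy inequality\<close>

lemma odd_double_fact_eq_prod: "real (odd_double_fact n) = (\<Prod>k<n. 2 * real k + 1)"
proof (induction n)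
  case (Suc n)
  have "odd_double_fact (Suc n) = odd_double_fact n * (2 * Suc n - 1)"
    unfolding odd_double_fact_def by (simp add: prod.nat_ivl_Suc')
  then show ?case using Suc by (simp add: of_nat_diff algebra_simps)
qed (simp add: odd_double_fact_def)

lemma odd_double_fact_pos: "0 < odd_double_fact n"
  using odd_double_fact_eq_prod[of n] prod_pos[of "{..<n}" "\<lambda>k. 2 * real k + 1"] by simp

lemma odd_double_fact_sq_mult_hardy_prod:
  "(real (odd_double_fact n))\<^sup>2 / 2 ^ (2 * n) * (\<Prod>k<n. 1/(real k+1/2)^2) = 1"
proof -
  have "(\<Prod>k<n. 1/(real k+1/2)^2) = (\<Prod>k<n. 4/(2*real k+1)^2)"
    by (intro prod.cong) (auto simp: field_simps power2_eq_square)
  also have "\<dots> = 4^n / (\<Prod>k<n. 2*real k+1)^2"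
    by (simp add: prod_dividef power_mult_distrib[symmetric] prod_power_distrib)
  finally show ?thesis
    by (simp add: odd_double_fact_eq_prod power_mult prod_pos)
qed

lemma ennreal_less_of_add_le:
  fixes x y z :: ennreal
  assumes "x + y \<le> z" "z < \<infinity>" "0 < y"
  shows "x < z"
proof (rule ccontr)
  assume "\<not> x < z"
  then have "z + y \<le> z" using assms(1) by (meson add_right_mono not_less order_trans)
  then show False using assms(2,3) by auto
qed

lemma hardy_chain_zero_of_remainder_zero:
  fixes w :: "nat \<Rightarrow> real \<Rightarrow> real"
  assumes w: "hardy_chain b n w" and n: "1 \<le> n"
    and z: "(\<integral>\<^sup>+t. indicator {0<..<a} t * ennreal (t powr e * (w 1 t)^2) \<partial>lborel) = 0"
    and x: "0 < x" "x \<le> a" and ab: "a < b"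
  shows "w 0 x = 0"
proof -
  note lebesgue_measurable_ident[measurable]
  have [measurable]: "w 1 \<in> borel_measurable lebesgue" using hardy_chainD(1)[OF w] n by simp
  have "(\<integral>\<^sup>+t. indicator {0<..<a} t * ennreal (t powr e * (w 1 t)^2) \<partial>lebesgue) = 0"
    using z by (simp add: nn_integral_completion)
  then have "AE t in lebesgue. indicator {0<..<a} t * ennreal (t powr e * (w 1 t)^2) = 0"
    by (subst (asm) nn_integral_0_iff_AE) measurable
  then have "AE t in lebesgue. indicator {0<..<x} t * ennreal (w 1 t) = 0"
  proof eventually_elim
    case (elim t)
    show ?case
    proof (cases "t \<in> {0<..<x}")
      case True
      then have "t powr e * (w 1 t)^2 \<le> 0" using elim x by (auto simp: indicator_def)
      then have "w 1 t = 0"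
        using True hardy_chainD(2)[OF w, of 1 t] by (simp add: mult_le_0_iff)
      then show ?thesis by simp
    qed simp
  qed
  then have "(\<integral>\<^sup>+t. indicator {0<..<x} t * ennreal (w 1 t) \<partial>lborel) = 0"
    by (subst (asm) nn_integral_0_iff_AE[symmetric]) (measurable, simp add: nn_integral_completion)
  then have "ennreal (w 0 x) \<le> 0"
    using hardy_chainD(3)[OF w, of 0 x] n x ab by simp
  then show ?thesis using hardy_chainD(2)[OF w, of 0 x] by simp
qed

lemma deriv_chain_remainder_nonzero:
  fixes f :: "real \<Rightarrow> 'a::{banach, second_countable_topology}" and g :: "nat \<Rightarrow> real \<Rightarrow> 'a"
  assumes b: "0 < b" and n: "1 \<le> n" and ch: "deriv_chain b n f g"
    and gn: "set_borel_measurable lebesgue {0<..<b} (g n)" and nz: "\<exists>x\<in>{0..b}. f x \<noteq> 0"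
  shows "(\<integral>\<^sup>+t. indicator {0<..<b/2} t * ennreal (t powr e * (norm_on_Ioo b (g 1) t)^2) \<partial>lborel) \<noteq> 0
    \<or> (\<integral>\<^sup>+t. indicator {0<..<b/2} t * ennreal (t powr e * (norm_on_Ioo b (g 1) (b - t))^2) \<partial>lborel) \<noteq> 0"
proof (rule ccontr)
  assume "\<not> ?thesis"
  then have left: "norm_on_Ioo b (g 0) x = 0" and right: "norm_on_Ioo b (g 0) (b - x) = 0"
    if "0 < x" "x \<le> b/2" for x
    using hardy_chain_zero_of_remainder_zero[OF deriv_chain_hardy_chain_left[OF ch gn] n _ that]
      hardy_chain_zero_of_remainder_zero[OF deriv_chain_hardy_chain_right[OF ch gn] n _ that] b
    by auto
  have "g 0 x = 0" if "0 < x" "x < b" for x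
  proof (cases "x \<le> b/2")
    case False
    then have "norm_on_Ioo b (g 0) (b - (b - x)) = 0" using that by (intro right) auto
    then show ?thesis using that by simp
  qed (use that left[of x] in simp)
  moreover have "g 0 0 = 0" "g 0 b = 0" using ch n by (auto simp: deriv_chain_def)
  moreover have "f x = g 0 x" if "x \<in> {0..b}" for x using ch that by (auto simp: deriv_chain_def)
  ultimately have "f x = 0" if "x \<in> {0..b}" for x
    using that by (cases "x = 0 \<or> x = b") auto
  then show False using nz by auto
qed

lemma deriv_chain_hardy_inequality_strict:
  fixes f :: "real \<Rightarrow> 'a::{banach, second_countable_topology}" and g :: "nat \<Rightarrow> real \<Rightarrow> 'a"
  assumes b: "0 < b" and n: "1 \<le> n" and ch: "deriv_chain b n f g" and L2n: "L2_on b (g n)"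
    and nz: "\<exists>x\<in>{0..b}. f x \<noteq> 0"
  shows "(\<integral>\<^sup>+ x\<in>{0<..<b}. ennreal ((norm (g n x))\<^sup>2) \<partial>lebesgue)
           > ennreal ((real (odd_double_fact n))\<^sup>2 / 2 ^ (2 * n))
             * (\<integral>\<^sup>+ x\<in>{0<..<b}. ennreal ((norm (f x))\<^sup>2 / (dist_bd b x) ^ (2 * n)) \<partial>lebesgue)"
proof -
  define a where "a = b / 2"
  have a: "0 < a" "a < b" using b by (auto simp: a_def)
  define w where "w j = norm_on_Ioo b (g j)" for j
  define w' where "w' j t = w j (b - t)" for j t
  have gn: "set_borel_measurable lebesgue {0<..<b} (g n)" using L2n by (simp add: L2_on_def)
  have Lb: "hardy_chain b n w" unfolding w_def by (rule deriv_chain_hardy_chain_left[OF ch gn])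
  have Rb: "hardy_chain b n w'" unfolding w'_def w_def by (rule deriv_chain_hardy_chain_right[OF ch gn])
  have L: "hardy_chain a n w" and R: "hardy_chain a n w'"
    using hardy_chain_subinterval[OF Lb] hardy_chain_subinterval[OF Rb] a by auto
  have fg: "f x = g 0 x" if "x \<in> {0<..<b}" for x using ch that by (auto simp: deriv_chain_def)
  have g0: "set_borel_measurable lebesgue {0<..<b} (g 0)" by (rule deriv_chain_set_borel_measurable[OF ch gn]) simp
  define P where "P = (\<Prod>k<n. 1/(real k+1/2)^2)"
  define c0 where "c0 = a powr (-(real (n-1)+1/2)) / (real (n-1)+1/2)^2"
  define Q where "Q v = (\<integral>\<^sup>+x. indicator {0<..<a} x * ennreal ((v 0 x)^2 * x powr (-(2*real n))) \<partial>lborel)"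
    for v :: "nat \<Rightarrow> real \<Rightarrow> real"
  define E where "E v = (\<integral>\<^sup>+t. indicator {0<..<a} t * ennreal (t powr (1/2 - real (n-1)) * (v 1 t)^2) \<partial>lborel)"
    for v :: "nat \<Rightarrow> real \<Rightarrow> real"
  define I where "I v = (\<integral>\<^sup>+x. indicator {0<..<a} x * ennreal ((v n x)^2) \<partial>lborel)"
    for v :: "nat \<Rightarrow> real \<Rightarrow> real"
  have SL: "Q w + ennreal c0 * E w \<le> ennreal P * I w"
    unfolding Q_def E_def I_def c0_def P_def by (rule hardy_inequality_iterated_remainder[OF a(1) n L])
  have SR: "Q w' + ennreal c0 * E w' \<le> ennreal P * I w'"
    unfolding Q_def E_def I_def c0_def P_def by (rule hardy_inequality_iterated_remainder[OF a(1) n R])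
  have lhs: "(\<integral>\<^sup>+ x\<in>{0<..<b}. ennreal ((norm (g n x))\<^sup>2) \<partial>lebesgue) = I w + I w'"
    unfolding nn_integral_norm_sq_split[OF b gn] I_def w'_def w_def a_def ..
  have rhs: "(\<integral>\<^sup>+ x\<in>{0<..<b}. ennreal ((norm (f x))\<^sup>2 / (dist_bd b x) ^ (2 * n)) \<partial>lebesgue) = Q w + Q w'"
    unfolding Q_def w'_def w_def a_def by (rule nn_integral_dist_bd_split[OF b g0 fg])
  have fin: "I w + I w' < \<infinity>"
    using L2n L2_on_iff_nn_integral_finite[OF gn] lhs by simp
  have "E w \<noteq> 0 \<or> E w' \<noteq> 0"
    using deriv_chain_remainder_nonzero[OF b n ch gn nz] unfolding E_def w'_def w_def a_def .
  then have pos: "0 < ennreal c0 * E w + ennreal c0 * E w'"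
    using a by (auto simp: c0_def distrib_left[symmetric] ennreal_zero_less_mult_iff zero_less_iff_neq_zero)
  define C where "C = (real (odd_double_fact n))\<^sup>2 / 2 ^ (2 * n)"
  have C: "0 < C" using odd_double_fact_pos[of n] by (simp add: C_def)
  have CP: "C * P = 1" unfolding C_def P_def by (rule odd_double_fact_sq_mult_hardy_prod)
  have "ennreal C * (Q w + Q w') + ennreal C * (ennreal c0 * E w + ennreal c0 * E w')
      = ennreal C * ((Q w + ennreal c0 * E w) + (Q w' + ennreal c0 * E w'))"
    by (simp add: algebra_simps)
  also have "\<dots> \<le> ennreal C * (ennreal P * I w + ennreal P * I w')"
    by (intro mult_left_mono add_mono SL SR) simp
  also have "\<dots> = ennreal (C * P) * (I w + I w')"
    using C by (simp add: ennreal_mult P_def prod_nonneg algebra_simps)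
  finally have "ennreal C * (Q w + Q w') + ennreal C * (ennreal c0 * E w + ennreal c0 * E w') \<le> I w + I w'"
    using CP by simp
  then have "ennreal C * (Q w + Q w') < I w + I w'"
    by (rule ennreal_less_of_add_le[OF _ fin]) (use C pos in \<open>simp add: ennreal_zero_less_mult_iff\<close>)
  then show ?thesis unfolding lhs rhs C_def .
qed

section \<open>Sharpness of the constant\<close>

definition falling_fact :: "real \<Rightarrow> nat \<Rightarrow> real" where
  "falling_fact q j = (\<Prod>i<j. q - real i)"

lemma falling_fact_0 [simp]: "falling_fact q 0 = 1"
  by (simp add: falling_fact_def)

lemma falling_fact_Suc: "falling_fact q (Suc j) = falling_fact q j * (q - real j)"
  by (simp add: falling_fact_def)

lemma falling_fact_Suc_diff: "falling_fact (x + 1) (Suc j) - falling_fact x (Suc j) = real (Suc j) * falling_fact x j"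
proof -
  have a: "falling_fact (x+1) (Suc j) = (x + 1) * falling_fact x j"
    by (induction j) (simp_all add: falling_fact_Suc algebra_simps)
  have "falling_fact (x + 1) (Suc j) - falling_fact x (Suc j) = (x + 1) * falling_fact x j - falling_fact x j * (x - real j)"
    by (subst a) (simp only: falling_fact_Suc)
  then show ?thesis by (simp add: algebra_simps)
qed

lemma falling_fact_half_sq: "(falling_fact (real n - 1/2) n)^2 = (real (odd_double_fact n))^2 / 2^(2*n)"
proof -
  have "falling_fact (real n - 1/2) n = (\<Prod>i<n. real (n - Suc i) + 1/2)"
    unfolding falling_fact_def by (intro prod.cong refl) (auto simp: of_nat_diff)
  also have "\<dots> = (\<Prod>k<n. real k + 1/2)" by (rule prod.nat_diff_reindex)
  also have "\<dots> = (\<Prod>k<n. (2 * real k + 1) / 2)" by (intro prod.cong refl) (simp add: field_simps)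
  also have "\<dots> = real (odd_double_fact n) / 2^n" by (simp add: prod_dividef odd_double_fact_eq_prod)
  finally show ?thesis by (simp add: power_divide power_mult[symmetric] mult.commute)
qed

lemma falling_fact_tendsto: "((\<lambda>\<delta>. falling_fact (real n - 1/2 + \<delta>) n) \<longlongrightarrow> falling_fact (real n - 1/2) n) (at_right 0)"
proof -
  have c: "isCont (\<lambda>q. falling_fact q n) q" for q unfolding falling_fact_def by (intro continuous_intros)
  have "((\<lambda>\<delta>. real n - 1/2 + \<delta>) \<longlongrightarrow> real n - 1/2 + 0) (at_right 0)" by (intro tendsto_intros)
  then have "((\<lambda>\<delta>. real n - 1/2 + \<delta>) \<longlongrightarrow> real n - 1/2) (at_right 0)" by simp
  from isCont_tendsto_compose[OF c this] show ?thesis .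
qed

lemma abs_falling_fact_le:
  assumes "k \<le> n" "1 \<le> n" "m \<le> n" "real n - 1 < p" "p < real n"
  shows "\<bar>falling_fact (p + real m) k\<bar> \<le> (2 * real n) ^ n"
proof -
  have "\<bar>falling_fact (p + real m) k\<bar> = (\<Prod>i<k. \<bar>p + real m - real i\<bar>)" by (simp add: falling_fact_def abs_prod)
  also have "\<dots> \<le> (\<Prod>i<k. 2 * real n)"
  proof (rule prod_mono)
    fix i assume "i \<in> {..<k}"
    then have "real i \<le> real n - 1" using assms by auto
    then show "0 \<le> \<bar>p + real m - real i\<bar> \<and> \<bar>p + real m - real i\<bar> \<le> 2 * real n" using assms by auto
  qed
  also have "\<dots> = (2 * real n) ^ k" by simp
  also have "\<dots> \<le> (2 * real n) ^ n"
  proof (rule power_increasing[OF assms(1)])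
    show "1 \<le> 2 * real n" using assms(2) by simp
  qed
  finally show ?thesis .
qed

definition binomial_difference :: "nat \<Rightarrow> nat \<Rightarrow> real \<Rightarrow> real" where
  "binomial_difference n j q = (\<Sum>m\<le>n. real (n choose m) * (-1)^m * falling_fact (q + real m) j)"

lemma binomial_difference_Suc: "binomial_difference (Suc n) j q = binomial_difference n j q - binomial_difference n j (q + 1)"
proof -
  define G where "G m = real (n choose m) * (-1)^m * falling_fact (q + real m) j" for m
  have e1: "binomial_difference n j q = G 0 + (\<Sum>m\<le>n. G (Suc m))"
  proof -
    have "binomial_difference n j q = (\<Sum>m\<le>Suc n. G m)" unfolding binomial_difference_def G_def by (simp add: sum.atMost_Suc)
    also have "\<dots> = G 0 + (\<Sum>m\<le>n. G (Suc m))" by (rule sum.atMost_Suc_shift)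
    finally show ?thesis .
  qed
  have e2: "binomial_difference (Suc n) j q = G 0 + (\<Sum>m\<le>n. G (Suc m) - real (n choose m) * (-1)^m * falling_fact (q + 1 + real m) j)"
  proof -
    have "binomial_difference (Suc n) j q = real (Suc n choose 0) * (-1)^0 * falling_fact (q + real 0) j
       + (\<Sum>m\<le>n. real (Suc n choose Suc m) * (-1)^(Suc m) * falling_fact (q + real (Suc m)) j)"
      unfolding binomial_difference_def by (rule sum.atMost_Suc_shift)
    also have "(\<Sum>m\<le>n. real (Suc n choose Suc m) * (-1)^(Suc m) * falling_fact (q + real (Suc m)) j)
       = (\<Sum>m\<le>n. G (Suc m) - real (n choose m) * (-1)^m * falling_fact (q + 1 + real m) j)"
    proof (intro sum.cong refl)
      fix m
      have "q + real (Suc m) = q + 1 + real m" by simp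
      then show "real (Suc n choose Suc m) * (-1)^(Suc m) * falling_fact (q + real (Suc m)) j
        = G (Suc m) - real (n choose m) * (-1)^m * falling_fact (q + 1 + real m) j"
        unfolding G_def by (simp add: algebra_simps)
    qed
    finally show ?thesis by (simp add: G_def)
  qed
  have e3: "binomial_difference n j (q + 1) = (\<Sum>m\<le>n. real (n choose m) * (-1)^m * falling_fact (q + 1 + real m) j)"
    unfolding binomial_difference_def by (simp add: add_ac)
  show ?thesis unfolding e1 e2 e3 by (simp add: sum_subtractf)
qed

lemma binomial_difference_shift:
  assumes j1: "j \<ge> 1"
  shows "binomial_difference n j (q + 1) - binomial_difference n j q = real j * binomial_difference n (j - 1) q"
proof -
  obtain j' where j: "j = Suc j'" using j1 by (cases j) auto
  have "binomial_difference n j (q + 1) - binomial_difference n j q = (\<Sum>m\<le>n. real (n choose m) * (-1)^m * (falling_fact (q + real m + 1) j - falling_fact (q + real m) j))"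
    unfolding binomial_difference_def by (simp add: sum_subtractf[symmetric] algebra_simps add_ac)
  also have "\<dots> = (\<Sum>m\<le>n. real j * (real (n choose m) * (-1)^m * falling_fact (q + real m) (j - 1)))"
    unfolding j by (intro sum.cong refl) (simp add: falling_fact_Suc_diff)
  finally show ?thesis by (simp add: binomial_difference_def sum_distrib_left)
qed

(* An n-th finite difference annihilates the polynomial falling_fact (q + m) j of degree j < n;
   this makes the derivatives of the test function vanish at b. *)
lemma binomial_difference_eq_0: "j < n \<Longrightarrow> binomial_difference n j q = 0"
proof (induction n arbitrary: j q)
  case 0
  then show ?case by simp
next
  case (Suc n)
  show ?case
  proof (cases "j = 0")
    case True
    then show ?thesis unfolding binomial_difference_Suc by (simp add: binomial_difference_def)
  next
    case False
    have "binomial_difference (Suc n) j q = - (real j * binomial_difference n (j - 1) q)"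
      unfolding binomial_difference_Suc using binomial_difference_shift[of j n q] False by simp
    also have "binomial_difference n (j - 1) q = 0" using Suc False by simp
    finally show ?thesis by simp
  qed
qed

definition binomial_expansion_coeff :: "nat \<Rightarrow> real \<Rightarrow> nat \<Rightarrow> real" where
  "binomial_expansion_coeff n b m = real (n choose m) * b^(n-m) * (-1)^m"

(* The j-th derivative of x^p (b - x)^n, with (b - x)^n expanded binomially. *)
definition hardy_test :: "nat \<Rightarrow> real \<Rightarrow> real \<Rightarrow> nat \<Rightarrow> real \<Rightarrow> real" where
  "hardy_test n b p j x =
     (\<Sum>m\<le>n. binomial_expansion_coeff n b m * falling_fact (p + real m) j * x powr (p + real m - real j))"

lemma hardy_test_0_eq:
  assumes x: "0 < x"
  shows "hardy_test n b p 0 x = x powr p * (b - x)^n"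
proof -
  have "(b - x)^n = (-x + b)^n" by simp
  also have "\<dots> = (\<Sum>m\<le>n. real (n choose m) * (-x)^m * b^(n-m))" by (rule binomial_ring)
  finally have "x powr p * (b - x)^n = (\<Sum>m\<le>n. x powr p * (real (n choose m) * (-x)^m * b^(n-m)))"
    by (simp add: sum_distrib_left)
  also have "\<dots> = (\<Sum>m\<le>n. binomial_expansion_coeff n b m * falling_fact (p + real m) 0 * x powr (p + real m - real 0))"
  proof (intro sum.cong refl)
    fix m
    have "x powr p * x^m = x powr p * x powr (real m)" using x by (simp add: powr_realpow)
    also have "\<dots> = x powr (p + real m)" by (rule powr_add[symmetric])
    finally have 1: "x powr p * x^m = x powr (p + real m)" .
    have 2: "(-x)^m = (-1)^m * x^m" by (rule power_minus)
    have 3: "p + real m - real 0 = p + real m" by simp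
    show "x powr p * (real (n choose m) * (-x)^m * b^(n-m)) = binomial_expansion_coeff n b m * falling_fact (p + real m) 0 * x powr (p + real m - real 0)"
      unfolding binomial_expansion_coeff_def 2 3 falling_fact_0 1[symmetric] by (simp only: mult_ac)
  qed
  finally show ?thesis by (simp add: hardy_test_def)
qed

lemma hardy_test_at_0 [simp]: "hardy_test n b p j 0 = 0"
  by (simp add: hardy_test_def)

lemma hardy_test_at_b:
  assumes "j < n" "0 < b"
  shows "hardy_test n b p j b = 0"
proof -
  have "hardy_test n b p j b = (\<Sum>m\<le>n. b powr (p + real n - real j) * (real (n choose m) * (-1)^m * falling_fact (p + real m) j))"
    unfolding hardy_test_def binomial_expansion_coeff_def
  proof (intro sum.cong refl)
    fix m assume m: "m \<in> {..n}"
    have "b^(n-m) = b powr (real (n-m))" using assms by (simp add: powr_realpow)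
    also have "real (n - m) = real n - real m" using m by (simp add: of_nat_diff)
    finally have 1: "b^(n-m) * b powr (p + real m - real j) = b powr (real n - real m) * b powr (p + real m - real j)"
      by simp
    have 2: "b powr (real n - real m) * b powr (p + real m - real j) = b powr ((real n - real m) + (p + real m - real j))"
      by (rule powr_add[symmetric])
    have 3: "(real n - real m) + (p + real m - real j) = p + real n - real j" by simp
    have "b^(n-m) * b powr (p + real m - real j) = b powr (p + real n - real j)" unfolding 1 2 3 ..
    then show "real (n choose m) * b ^ (n - m) * (- 1) ^ m * falling_fact (p + real m) j * b powr (p + real m - real j) =
       b powr (p + real n - real j) * (real (n choose m) * (- 1) ^ m * falling_fact (p + real m) j)"
      by (simp add: algebra_simps)
  qed
  also have "\<dots> = b powr (p + real n - real j) * binomial_difference n j p" by (simp add: binomial_difference_def sum_distrib_left)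
  finally show ?thesis using binomial_difference_eq_0[OF assms(1)] by simp
qed

lemma hardy_test_has_derivative:
  assumes "0 < x"
  shows "((hardy_test n b p j) has_real_derivative hardy_test n b p (Suc j) x) (at x)"
  unfolding hardy_test_def[abs_def]
proof (rule DERIV_sum)
  fix m assume "m \<in> {..n}"
  have "((\<lambda>x. binomial_expansion_coeff n b m * falling_fact (p + real m) j * x powr (p + real m - real j)) has_real_derivative
     binomial_expansion_coeff n b m * falling_fact (p + real m) j * ((p + real m - real j) * x powr (p + real m - real j - 1))) (at x)"
    using assms by (auto intro!: derivative_eq_intros)
  moreover have "binomial_expansion_coeff n b m * falling_fact (p + real m) j * ((p + real m - real j) * x powr (p + real m - real j - 1))
     = binomial_expansion_coeff n b m * falling_fact (p + real m) (Suc j) * x powr (p + real m - real (Suc j))"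
    by (simp add: falling_fact_Suc algebra_simps diff_diff_eq)
  ultimately show "((\<lambda>x. binomial_expansion_coeff n b m * falling_fact (p + real m) j * x powr (p + real m - real j)) has_real_derivative
     binomial_expansion_coeff n b m * falling_fact (p + real m) (Suc j) * x powr (p + real m - real (Suc j))) (at x)" by simp
qed

lemma continuous_on_hardy_test:
  assumes "j < n" "real n - 1 < p"
  shows "continuous_on {0..} (hardy_test n b p j)"
  unfolding hardy_test_def[abs_def]
proof (intro continuous_on_sum continuous_on_mult continuous_on_const)
  fix m assume "m \<in> {..n}"
  show "continuous_on {0..} (\<lambda>x. x powr (p + real m - real j))"
    by (rule continuous_on_powr') (use assms in \<open>auto intro!: continuous_intros\<close>)
qed

lemma continuous_on_hardy_test_pos: "continuous_on {0<..} (hardy_test n b p j)"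
  unfolding hardy_test_def[abs_def]
  by (intro continuous_on_sum continuous_on_mult continuous_on_const continuous_on_powr continuous_on_id) auto

lemma powr_le_max_powr:
  assumes "0 < x" "x < b" "0 \<le> e" "e \<le> 2 * real n"
  shows "x powr e \<le> max 1 b powr (2 * real n)"
proof -
  have "x powr e \<le> max 1 b powr e" using assms by (intro powr_mono2) auto
  also have "\<dots> \<le> max 1 b powr (2 * real n)" using assms by (intro powr_mono) auto
  finally show ?thesis .
qed

definition hardy_test_bound :: "nat \<Rightarrow> real \<Rightarrow> real" where
  "hardy_test_bound n b = (\<Sum>m\<le>n. \<bar>binomial_expansion_coeff n b m\<bar>) * ((2 * real n) ^ n * max 1 b powr (2 * real n))"
lemma abs_hardy_test_term_le:
  assumes n: "1 \<le> n" and d: "0 < \<delta>" "\<delta> < 1/2" and p: "p = real n - 1/2 + \<delta>"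
    and k: "k \<le> n" and m: "m \<le> n" and x: "0 < x" "x < b"
    and s: "0 \<le> p + real m - real k - s" "p + real m - real k - s \<le> 2 * real n"
  shows "\<bar>binomial_expansion_coeff n b m * falling_fact (p + real m) k * x powr (p + real m - real k)\<bar>
    \<le> \<bar>binomial_expansion_coeff n b m\<bar> * ((2 * real n) ^ n * max 1 b powr (2 * real n)) * x powr s"
proof -
  have "x powr s * x powr (p + real m - real k - s) = x powr (s + (p + real m - real k - s))"
    by (rule powr_add[symmetric])
  then have "x powr (p + real m - real k) = x powr s * x powr (p + real m - real k - s)"
    by (simp add: algebra_simps)
  also have "\<dots> \<le> x powr s * max 1 b powr (2 * real n)"
    by (intro mult_left_mono powr_le_max_powr) (use x s in auto)
  finally have 1: "x powr (p + real m - real k) \<le> x powr s * max 1 b powr (2 * real n)" .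
  have 2: "\<bar>falling_fact (p + real m) k\<bar> \<le> (2 * real n) ^ n"
    by (rule abs_falling_fact_le) (use k m p d n in auto)
  have "\<bar>binomial_expansion_coeff n b m * falling_fact (p + real m) k * x powr (p + real m - real k)\<bar>
     = \<bar>binomial_expansion_coeff n b m\<bar> * \<bar>falling_fact (p + real m) k\<bar> * x powr (p + real m - real k)"
    by (simp add: abs_mult)
  also have "\<dots> \<le> \<bar>binomial_expansion_coeff n b m\<bar> * (2 * real n) ^ n * (x powr s * max 1 b powr (2 * real n))"
    by (intro mult_mono 1 2 mult_left_mono) auto
  finally show ?thesis by (simp add: algebra_simps)
qed

lemma abs_hardy_test_le:
  assumes n: "1 \<le> n" and d: "0 < \<delta>" "\<delta> < 1/2" and p: "p = real n - 1/2 + \<delta>"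
    and k: "k \<le> n" and x: "0 < x" "x < b"
  shows "\<bar>hardy_test n b p k x\<bar> \<le> hardy_test_bound n b * x powr (\<delta> - 1/2)"
proof -
  have "\<bar>hardy_test n b p k x\<bar>
      \<le> (\<Sum>m\<le>n. \<bar>binomial_expansion_coeff n b m * falling_fact (p + real m) k * x powr (p + real m - real k)\<bar>)"
    unfolding hardy_test_def by (rule sum_abs)
  also have "\<dots> \<le> (\<Sum>m\<le>n. \<bar>binomial_expansion_coeff n b m\<bar> * ((2 * real n) ^ n * max 1 b powr (2 * real n))
      * x powr (\<delta> - 1/2))"
    by (intro sum_mono abs_hardy_test_term_le[OF n d p k _ x]) (use p k in auto)
  also have "\<dots> = hardy_test_bound n b * x powr (\<delta> - 1/2)"
    unfolding hardy_test_bound_def sum_distrib_right ..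
  finally show ?thesis .
qed

lemma abs_hardy_test_top_minus_le:
  assumes n: "1 \<le> n" and d: "0 < \<delta>" "\<delta> < 1/2" and p: "p = real n - 1/2 + \<delta>"
    and x: "0 < x" "x < b"
  shows "\<bar>hardy_test n b p n x - b^n * falling_fact p n * x powr (p - real n)\<bar> \<le> hardy_test_bound n b"
proof -
  have "{..n} = insert 0 {1..n}" by auto
  then have "hardy_test n b p n x - b^n * falling_fact p n * x powr (p - real n)
      = (\<Sum>m\<in>{1..n}. binomial_expansion_coeff n b m * falling_fact (p + real m) n * x powr (p + real m - real n))"
    unfolding hardy_test_def by (simp add: binomial_expansion_coeff_def)
  then have "\<bar>hardy_test n b p n x - b^n * falling_fact p n * x powr (p - real n)\<bar>
      \<le> (\<Sum>m\<in>{1..n}. \<bar>binomial_expansion_coeff n b m * falling_fact (p + real m) n * x powr (p + real m - real n)\<bar>)"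
    by (simp add: sum_abs)
  also have "\<dots> \<le> (\<Sum>m\<in>{1..n}. \<bar>binomial_expansion_coeff n b m\<bar> * ((2 * real n) ^ n * max 1 b powr (2 * real n)))"
    using abs_hardy_test_term_le[OF n d p order_refl _ x, where s = 0] x p d
    by (intro sum_mono) auto
  also have "\<dots> \<le> (\<Sum>m\<le>n. \<bar>binomial_expansion_coeff n b m\<bar> * ((2 * real n) ^ n * max 1 b powr (2 * real n)))"
    by (intro sum_mono2) auto
  also have "\<dots> = hardy_test_bound n b" unfolding hardy_test_bound_def sum_distrib_right ..
  finally show ?thesis .
qed

lemma set_integrable_powr_bounded:
  fixes F :: "real \<Rightarrow> real"
  assumes cont: "continuous_on {0<..<b} F" and bd: "\<And>x. 0 < x \<Longrightarrow> x < b \<Longrightarrow> \<bar>F x\<bar> \<le> K * x powr e"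
    and e: "e > -1" and b: "0 < b"
  shows "set_integrable lebesgue {0<..<b} F"
  unfolding set_integrable_def
proof (rule integrableI_bounded)
  show "(\<lambda>x. indicator {0<..<b} x *\<^sub>R F x) \<in> borel_measurable lebesgue"
    by (intro borel_measurable_lebesgueI borel_measurable_continuous_on_indicator cont) auto
  have "(\<integral>\<^sup>+x. ennreal (norm (indicator {0<..<b} x *\<^sub>R F x)) \<partial>lebesgue)
     \<le> (\<integral>\<^sup>+x. ennreal \<bar>K\<bar> * (indicator {0<..<b} x * ennreal (x powr e)) \<partial>lebesgue)"
  proof (intro nn_integral_mono)
    fix x
    show "ennreal (norm (indicator {0<..<b} x *\<^sub>R F x)) \<le> ennreal \<bar>K\<bar> * (indicator {0<..<b} x * ennreal (x powr e))"
    proof (cases "x \<in> {0<..<b}")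
      case True
      have "\<bar>F x\<bar> \<le> \<bar>K\<bar> * x powr e" using bd[of x] True
        by (meson abs_ge_self dual_order.trans mult_right_mono powr_ge_zero greaterThanLessThan_iff)
      then show ?thesis using True by (simp add: ennreal_mult[symmetric] ennreal_leI)
    qed simp
  qed
  also have "\<dots> = ennreal \<bar>K\<bar> * (\<integral>\<^sup>+x. indicator {0<..<b} x * ennreal (x powr e) \<partial>lborel)"
    by (simp add: nn_integral_completion nn_integral_cmult)
  also have "\<dots> < \<infinity>" using nn_integral_powr_Ioo[OF e b] by (simp add: ennreal_mult_less_top)
  finally show "(\<integral>\<^sup>+x. ennreal (norm (indicator {0<..<b} x *\<^sub>R F x)) \<partial>lebesgue) < \<infinity>" .
qed

lemma set_integrable_hardy_test:
  assumes b: "0 < b" and n: "1 \<le> n" and d: "0 < \<delta>" "\<delta> < 1/2" and p: "p = real n - 1/2 + \<delta>" and k: "k \<le> n"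
  shows "set_integrable lebesgue {0<..<b} (hardy_test n b p k)"
  by (rule set_integrable_powr_bounded[OF continuous_on_subset[OF continuous_on_hardy_test_pos]
      abs_hardy_test_le[OF n d p k] _ b]) (use d in auto)

lemma hardy_test_integral:
  assumes b: "0 < b" and n: "1 \<le> n" and d: "0 < \<delta>" "\<delta> < 1/2" and p: "p = real n - 1/2 + \<delta>"
    and j: "j < n" and y: "0 \<le> y" "y \<le> b"
  shows "(LINT t:{0..y}|lebesgue. hardy_test n b p (Suc j) t) = hardy_test n b p j y"
proof -
  have "(hardy_test n b p (Suc j) has_integral hardy_test n b p j y - hardy_test n b p j 0) {0..y}"
  proof (rule fundamental_theorem_of_calculus_interior[OF y(1)])
    show "continuous_on {0..y} (hardy_test n b p j)"
      by (rule continuous_on_subset[OF continuous_on_hardy_test[OF j]]) (use p d in auto)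
    fix x assume "x \<in> {0<..<y}"
    then show "(hardy_test n b p j has_vector_derivative hardy_test n b p (Suc j) x) (at x)"
      using hardy_test_has_derivative[of x n b p j] by (simp add: has_real_derivative_iff_has_vector_derivative)
  qed
  moreover have "set_integrable lebesgue {0..y} (hardy_test n b p (Suc j))"
    by (rule set_integrable_Icc_of_Ioo[OF set_integrable_hardy_test[OF b n d p] y]) (use j in simp)
  ultimately show ?thesis
    by (simp add: set_lebesgue_integral_eq_integral(2) integral_unique)
qed

lemma AC_with_deriv_hardy_test:
  fixes v :: "'a::{banach, second_countable_topology}"
  assumes b: "0 < b" and n: "1 \<le> n" and d: "0 < \<delta>" "\<delta> < 1/2" and p: "p = real n - 1/2 + \<delta>" and j: "j < n"
  shows "AC_with_deriv b (\<lambda>x. hardy_test n b p j x *\<^sub>R v) (\<lambda>x. hardy_test n b p (Suc j) x *\<^sub>R v)"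
  unfolding AC_with_deriv_def
proof (intro conjI ballI)
  have int: "set_integrable lebesgue {0<..<b} (hardy_test n b p (Suc j))"
    by (rule set_integrable_hardy_test[OF b n d p]) (use j in simp)
  then show "set_integrable lebesgue {0<..<b} (\<lambda>x. hardy_test n b p (Suc j) x *\<^sub>R v)" by simp
  fix y assume "y \<in> {0..b}"
  then have y: "0 \<le> y" "y \<le> b" by auto
  have "integrable lebesgue (\<lambda>t. indicator {0..y} t * hardy_test n b p (Suc j) t)"
    using set_integrable_Icc_of_Ioo[OF int y] by (simp add: set_integrable_def)
  then have "(LINT t|lebesgue. (indicator {0..y} t * hardy_test n b p (Suc j) t) *\<^sub>R v)
      = (LINT t|lebesgue. indicator {0..y} t * hardy_test n b p (Suc j) t) *\<^sub>R v"
    by (rule integral_scaleR_left)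
  then have "(LINT t:{0..y}|lebesgue. hardy_test n b p (Suc j) t *\<^sub>R v)
      = (LINT t:{0..y}|lebesgue. hardy_test n b p (Suc j) t) *\<^sub>R v"
    unfolding set_lebesgue_integral_def by simp
  then show "hardy_test n b p j y *\<^sub>R v
      = hardy_test n b p j 0 *\<^sub>R v + (LINT t:{0..y}|lebesgue. hardy_test n b p (Suc j) t *\<^sub>R v)"
    using hardy_test_integral[OF b n d p j y] by simp
qed

lemma L2_on_hardy_test:
  fixes v :: "'a::{banach, second_countable_topology}"
  assumes b: "0 < b" and n: "1 \<le> n" and d: "0 < \<delta>" "\<delta> < 1/2" and p: "p = real n - 1/2 + \<delta>" and k: "k \<le> n"
  shows "L2_on b (\<lambda>x. hardy_test n b p k x *\<^sub>R v)"
  unfolding L2_on_def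
proof
  have cont: "continuous_on {0<..<b} (hardy_test n b p k)"
    by (rule continuous_on_subset[OF continuous_on_hardy_test_pos]) auto
  then have "continuous_on {0<..<b} (\<lambda>x. hardy_test n b p k x *\<^sub>R v)" by (intro continuous_intros)
  then show "set_borel_measurable lebesgue {0<..<b} (\<lambda>x. hardy_test n b p k x *\<^sub>R v)"
    unfolding set_borel_measurable_def
    by (intro borel_measurable_lebesgueI borel_measurable_continuous_on_indicator) auto
  show "set_integrable lebesgue {0<..<b} (\<lambda>x. (norm (hardy_test n b p k x *\<^sub>R v))\<^sup>2)"
  proof (rule set_integrable_powr_bounded[where K = "(hardy_test_bound n b)^2 * (norm v)^2" and e = "2 * \<delta> - 1"])
    show "continuous_on {0<..<b} (\<lambda>x. (norm (hardy_test n b p k x *\<^sub>R v))\<^sup>2)" by (intro continuous_intros cont)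
    fix x assume x: "0 < x" "x < b"
    have "(hardy_test n b p k x)^2 \<le> (hardy_test_bound n b * x powr (\<delta> - 1/2))^2"
      using power_mono[OF abs_hardy_test_le[OF n d p k x] abs_ge_zero, of 2] by simp
    also have "\<dots> = (hardy_test_bound n b)^2 * x powr (2 * \<delta> - 1)"
      using x by (simp add: power_mult_distrib power2_eq_square powr_add[symmetric])
    finally show "\<bar>(norm (hardy_test n b p k x *\<^sub>R v))\<^sup>2\<bar> \<le> (hardy_test_bound n b)^2 * (norm v)^2 * x powr (2 * \<delta> - 1)"
      by (simp add: power_mult_distrib mult.commute mult.left_commute mult_left_mono)
  qed (use d b in auto)
qed

lemma hardy_test_deriv_chain:
  fixes v :: "'a::{banach, second_countable_topology}"
  assumes b: "0 < b" and n: "1 \<le> n" and d: "0 < \<delta>" "\<delta> < 1/2" and p: "p = real n - 1/2 + \<delta>"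
  shows "deriv_chain b n (\<lambda>x. hardy_test n b p 0 x *\<^sub>R v) (\<lambda>j x. hardy_test n b p j x *\<^sub>R v)"
  unfolding deriv_chain_def
  by (auto intro: AC_with_deriv_hardy_test[OF b n d p] hardy_test_at_b[OF _ b])

lemma square_add_le_weighted:
  fixes a r \<eta> :: real
  assumes "0 < \<eta>"
  shows "(a + r)^2 \<le> (1 + \<eta>) * a^2 + (1 + 1/\<eta>) * r^2"
proof -
  have "0 \<le> (\<eta> * a - r)^2 / \<eta>" using assms by simp
  also have "(\<eta> * a - r)^2 / \<eta> = \<eta> * a^2 - 2 * a * r + r^2 / \<eta>"
    using assms by (simp add: power2_eq_square field_simps)
  finally show ?thesis by (simp add: power2_eq_square algebra_simps add_divide_distrib)
qed

lemma hardy_test_top_sq_le: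
  assumes n: "1 \<le> n" and d: "0 < \<delta>" "\<delta> < 1/2" and p: "p = real n - 1/2 + \<delta>" and \<eta>: "0 < \<eta>"
    and x: "0 < x" "x < b"
  shows "(hardy_test n b p n x)^2
    \<le> (1 + \<eta>) * (b^n * falling_fact p n)^2 * x powr (2*\<delta> - 1) + (1 + 1/\<eta>) * (hardy_test_bound n b)^2"
proof -
  define A where "A = b^n * falling_fact p n * x powr (p - real n)"
  define r where "r = hardy_test n b p n x - A"
  have "\<bar>r\<bar> \<le> hardy_test_bound n b"
    unfolding r_def A_def by (rule abs_hardy_test_top_minus_le[OF n d p x])
  then have r: "r^2 \<le> (hardy_test_bound n b)^2" using power_mono[OF _ abs_ge_zero, of r _ 2] by simp
  have A: "A^2 = (b^n * falling_fact p n)^2 * x powr (2*\<delta> - 1)"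
  proof -
    have "(x powr (p - real n))^2 = x powr ((p - real n) + (p - real n))"
      unfolding power2_eq_square by (rule powr_add[symmetric])
    also have "(p - real n) + (p - real n) = 2*\<delta> - 1" using p by simp
    finally show ?thesis by (simp add: A_def power_mult_distrib)
  qed
  have "(hardy_test n b p n x)^2 \<le> (1 + \<eta>) * A^2 + (1 + 1/\<eta>) * r^2"
    using square_add_le_weighted[OF \<eta>, of A r] by (simp add: r_def)
  also have "\<dots> \<le> (1 + \<eta>) * A^2 + (1 + 1/\<eta>) * (hardy_test_bound n b)^2"
    using r \<eta> by (intro add_left_mono mult_left_mono) auto
  finally show ?thesis by (simp only: A mult.assoc)
qed

lemma hardy_test_energy_le:
  fixes v :: "'a::{banach, second_countable_topology}"
  assumes b: "0 < b" and n: "1 \<le> n" and d: "0 < \<delta>" "\<delta> < 1/2" and p: "p = real n - 1/2 + \<delta>" and eta: "0 < \<eta>"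
  shows "(\<integral>\<^sup>+ x\<in>{0<..<b}. ennreal ((norm (hardy_test n b p n x *\<^sub>R v))\<^sup>2) \<partial>lebesgue)
     \<le> ennreal ((norm v)^2 * ((1 + \<eta>) * (b^n * falling_fact p n)^2 * (b powr (2*\<delta>) / (2*\<delta>)) + (1 + 1/\<eta>) * (hardy_test_bound n b)^2 * b))"
proof -
  define A where "A = b^n * falling_fact p n"
  define K where "K = hardy_test_bound n b"
  define c1 where "c1 = (norm v)^2 * (1 + \<eta>) * A^2"
  define c2 where "c2 = (norm v)^2 * (1 + 1/\<eta>) * K^2"
  have c1: "0 \<le> c1" and c2: "0 \<le> c2" using eta by (auto simp: c1_def c2_def)
  have "(\<integral>\<^sup>+ x\<in>{0<..<b}. ennreal ((norm (hardy_test n b p n x *\<^sub>R v))\<^sup>2) \<partial>lebesgue)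
     \<le> (\<integral>\<^sup>+x. ennreal c1 * (indicator {0<..<b} x * ennreal (x powr (2*\<delta> - 1))) + ennreal c2 * indicator {0<..<b} x \<partial>lborel)"
    unfolding nn_integral_completion
  proof (intro nn_integral_mono)
    fix x
    show "ennreal ((norm (hardy_test n b p n x *\<^sub>R v))\<^sup>2) * indicator {0<..<b} x
        \<le> ennreal c1 * (indicator {0<..<b} x * ennreal (x powr (2*\<delta> - 1))) + ennreal c2 * indicator {0<..<b} x"
    proof (cases "x \<in> {0<..<b}")
      case True
      then have x: "0 < x" "x < b" by auto
      have "(hardy_test n b p n x)^2 \<le> (1 + \<eta>) * (A^2 * x powr (2*\<delta> - 1)) + (1 + 1/\<eta>) * K^2"
        using hardy_test_top_sq_le[OF n d p eta x] by (simp add: A_def K_def mult.assoc)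
      then have "(hardy_test n b p n x)^2 * (norm v)^2 \<le> ((1 + \<eta>) * (A^2 * x powr (2*\<delta> - 1)) + (1 + 1/\<eta>) * K^2) * (norm v)^2"
        by (rule mult_right_mono) simp
      then have le: "(norm (hardy_test n b p n x *\<^sub>R v))\<^sup>2 \<le> c1 * x powr (2*\<delta> - 1) + c2"
        by (simp add: c1_def c2_def power_mult_distrib algebra_simps)
      have "ennreal ((norm (hardy_test n b p n x *\<^sub>R v))\<^sup>2) \<le> ennreal (c1 * x powr (2*\<delta> - 1) + c2)"
        by (rule ennreal_leI[OF le])
      also have "\<dots> = ennreal c1 * ennreal (x powr (2*\<delta> - 1)) + ennreal c2"
        using c1 c2 by (simp add: ennreal_plus ennreal_mult)
      finally show ?thesis using True by simp
    qed simp
  qed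
  also have "\<dots> = ennreal c1 * (\<integral>\<^sup>+x. indicator {0<..<b} x * ennreal (x powr (2*\<delta> - 1)) \<partial>lborel)
      + ennreal c2 * (\<integral>\<^sup>+x. indicator {0<..<b} x \<partial>lborel)"
    by (subst nn_integral_add) (auto simp: nn_integral_cmult)
  also have "(\<integral>\<^sup>+x. indicator {0<..<b} x * ennreal (x powr (2*\<delta> - 1)) \<partial>lborel) = ennreal (b powr (2*\<delta>) / (2*\<delta>))"
    using nn_integral_powr_Ioo[of "2*\<delta> - 1" b] d b by simp
  also have "(\<integral>\<^sup>+x. indicator {0<..<b} x \<partial>lborel) = ennreal b" using b by simp
  also have "ennreal c1 * ennreal (b powr (2*\<delta>) / (2*\<delta>)) + ennreal c2 * ennreal b
      = ennreal ((norm v)^2 * ((1 + \<eta>) * (b^n * falling_fact p n)^2 * (b powr (2*\<delta>) / (2*\<delta>)) + (1 + 1/\<eta>) * (hardy_test_bound n b)^2 * b))"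
  proof -
    have "ennreal c1 * ennreal (b powr (2*\<delta>) / (2*\<delta>)) + ennreal c2 * ennreal b
       = ennreal (c1 * (b powr (2*\<delta>) / (2*\<delta>)) + c2 * b)"
    proof -
      have X: "0 \<le> b powr (2*\<delta>) / (2*\<delta>)" using d by simp
      have 1: "ennreal c1 * ennreal (b powr (2*\<delta>) / (2*\<delta>)) = ennreal (c1 * (b powr (2*\<delta>) / (2*\<delta>)))"
        by (rule ennreal_mult[symmetric]) (use c1 X in auto)
      have 2: "ennreal c2 * ennreal b = ennreal (c2 * b)" by (rule ennreal_mult[symmetric]) (use c2 b in auto)
      have 3: "ennreal (c1 * (b powr (2*\<delta>) / (2*\<delta>))) + ennreal (c2 * b) = ennreal (c1 * (b powr (2*\<delta>) / (2*\<delta>)) + c2 * b)"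
        by (rule ennreal_plus[symmetric]) (use c1 c2 b X in \<open>auto intro!: mult_nonneg_nonneg simp del: times_divide_eq_right\<close>)
      show ?thesis unfolding 1 2 3 ..
    qed
    also have "c1 * (b powr (2*\<delta>) / (2*\<delta>)) + c2 * b = (norm v)^2 * ((1 + \<eta>) * (b^n * falling_fact p n)^2 * (b powr (2*\<delta>) / (2*\<delta>)) + (1 + 1/\<eta>) * (hardy_test_bound n b)^2 * b)"
      by (simp add: c1_def c2_def A_def K_def algebra_simps)
    finally show ?thesis .
  qed
  finally show ?thesis .
qed

lemma hardy_test_weighted_ge:
  fixes v :: "'a::{banach, second_countable_topology}"
  assumes b: "0 < b" and n: "1 \<le> n" and d: "0 < \<delta>" "\<delta> < 1/2" and p: "p = real n - 1/2 + \<delta>"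
    and c: "0 < c" "c \<le> b/2"
  shows "ennreal ((norm v)^2 * (b - c)^(2*n) * (c powr (2*\<delta>) / (2*\<delta>)))
     \<le> (\<integral>\<^sup>+ x\<in>{0<..<b}. ennreal ((norm (hardy_test n b p 0 x *\<^sub>R v))\<^sup>2 / (dist_bd b x) ^ (2 * n)) \<partial>lebesgue)"
proof -
  define c1 where "c1 = (norm v)^2 * (b - c)^(2*n)"
  have c1: "0 \<le> c1" using c by (simp add: c1_def)
  have "ennreal ((norm v)^2 * (b - c)^(2*n) * (c powr (2*\<delta>) / (2*\<delta>)))
      = ennreal c1 * (\<integral>\<^sup>+x. indicator {0<..<c} x * ennreal (x powr (2*\<delta> - 1)) \<partial>lborel)"
  proof -
    have "ennreal ((norm v)^2 * (b - c)^(2*n) * (c powr (2*\<delta>) / (2*\<delta>))) = ennreal c1 * ennreal (c powr (2*\<delta>) / (2*\<delta>))"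
      unfolding c1_def using c d by (intro ennreal_mult) auto
    also have "ennreal (c powr (2*\<delta>) / (2*\<delta>)) = (\<integral>\<^sup>+x. indicator {0<..<c} x * ennreal (x powr (2*\<delta> - 1)) \<partial>lborel)"
      using nn_integral_powr_Ioo[of "2*\<delta> - 1" c] d c by simp
    finally show ?thesis .
  qed
  also have "\<dots> = (\<integral>\<^sup>+x. ennreal c1 * (indicator {0<..<c} x * ennreal (x powr (2*\<delta> - 1))) \<partial>lborel)"
    by (rule nn_integral_cmult[symmetric]) measurable
  also have "\<dots> \<le> (\<integral>\<^sup>+ x\<in>{0<..<b}. ennreal ((norm (hardy_test n b p 0 x *\<^sub>R v))\<^sup>2 / (dist_bd b x) ^ (2 * n)) \<partial>lebesgue)"
    unfolding nn_integral_completion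
  proof (intro nn_integral_mono)
    fix x
    show "ennreal c1 * (indicator {0<..<c} x * ennreal (x powr (2*\<delta> - 1)))
       \<le> ennreal ((norm (hardy_test n b p 0 x *\<^sub>R v))\<^sup>2 / (dist_bd b x) ^ (2 * n)) * indicator {0<..<b} x"
    proof (cases "x \<in> {0<..<c}")
      case True
      then have x: "0 < x" "x < c" by auto
      have xb: "x \<in> {0<..<b}" using x c by auto
      have dd: "dist_bd b x = x" using x c by (auto simp: dist_bd_def)
      have "(norm (hardy_test n b p 0 x *\<^sub>R v))\<^sup>2 / (dist_bd b x) ^ (2 * n)
          = (norm v)^2 * (b - x)^(2*n) * ((x powr p)^2 / x^(2*n))"
        using x by (simp add: dd hardy_test_0_eq power_mult_distrib power_mult[symmetric] algebra_simps)
      also have "(x powr p)^2 / x^(2*n) = x powr (2*\<delta> - 1)"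
      proof -
        have "(x powr p)^2 = x powr (2*p)" using x by (simp add: power2_eq_square powr_add[symmetric])
        moreover have "x^(2*n) = x powr (2 * real n)" using x powr_realpow[of x "2*n"] by simp
        ultimately have "(x powr p)^2 / x^(2*n) = x powr (2*p) / x powr (2 * real n)" by simp
        also have "\<dots> = x powr (2*p - 2 * real n)" by (rule powr_diff[symmetric])
        also have "2*p - 2 * real n = 2*\<delta> - 1" using p by simp
        finally show ?thesis .
      qed
      finally have eq: "(norm (hardy_test n b p 0 x *\<^sub>R v))\<^sup>2 / (dist_bd b x) ^ (2 * n) = (norm v)^2 * (b - x)^(2*n) * x powr (2*\<delta> - 1)" .
      have "(b - c)^(2*n) \<le> (b - x)^(2*n)" using x c by (intro power_mono) auto
      then have "c1 * x powr (2*\<delta> - 1) \<le> (norm v)^2 * (b - x)^(2*n) * x powr (2*\<delta> - 1)"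
        unfolding c1_def by (intro mult_right_mono mult_left_mono) auto
      then have "ennreal (c1 * x powr (2*\<delta> - 1)) \<le> ennreal ((norm v)^2 * (b - x)^(2*n) * x powr (2*\<delta> - 1))"
        by (rule ennreal_leI)
      then show ?thesis using True xb c1 unfolding eq by (simp add: ennreal_mult)
    qed simp
  qed
  finally show ?thesis .
qed
(* After multiplication by 2 delta the left side tends to (C + eps/3) b^(2n) as delta -> 0, which
   the choice of c keeps strictly below the limit (C + eps) (b - c)^(2n) of the right side. *)
lemma hardy_sharpness_parameters:
  fixes n :: nat and b K \<epsilon> :: real
  assumes b: "0 < b" and e: "0 < \<epsilon>"
  defines "C \<equiv> (real (odd_double_fact n))\<^sup>2 / 2 ^ (2 * n)"
  shows "\<exists>\<eta> c \<delta>. 0 < \<eta> \<and> 0 < c \<and> c \<le> b/2 \<and> 0 < \<delta> \<and> \<delta> < 1/2 \<and>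
     (1 + \<eta>) * (b^n * falling_fact (real n - 1/2 + \<delta>) n)^2 * (b powr (2*\<delta>) / (2*\<delta>)) + (1 + 1/\<eta>) * K^2 * b
       \<le> (C + \<epsilon>) * ((b - c)^(2*n) * (c powr (2*\<delta>) / (2*\<delta>)))"
proof -
  have C: "0 < C" using odd_double_fact_pos[of n] by (simp add: C_def)
  define \<eta> where "\<eta> = \<epsilon> / (3 * C)"
  have \<eta>: "0 < \<eta>" "(1 + \<eta>) * C = C + \<epsilon>/3" using C e by (simp_all add: \<eta>_def field_simps)
  have "((\<lambda>c. (C + \<epsilon>) * (b - c)^(2*n)) \<longlongrightarrow> (C + \<epsilon>) * (b - 0)^(2*n)) (at_right 0)"
    by (intro tendsto_intros)
  moreover have "(C + 2*\<epsilon>/3) * b^(2*n) < (C + \<epsilon>) * (b - 0)^(2*n)" using b e by simp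
  ultimately have "\<forall>\<^sub>F c in at_right 0. (C + 2*\<epsilon>/3) * b^(2*n) < (C + \<epsilon>) * (b - c)^(2*n)"
    by (rule order_tendstoD(1))
  moreover have "\<forall>\<^sub>F c in at_right 0. c < b/2"
    using b by (intro order_tendstoD(2)[OF tendsto_ident_at]) simp
  ultimately have "\<forall>\<^sub>F c in at_right 0. 0 < c \<and> c < b/2 \<and> (C + 2*\<epsilon>/3) * b^(2*n) < (C + \<epsilon>) * (b - c)^(2*n)"
    by (intro eventually_conj eventually_at_right_less)
  then obtain c where "0 < c \<and> c < b/2 \<and> (C + 2*\<epsilon>/3) * b^(2*n) < (C + \<epsilon>) * (b - c)^(2*n)"
    using eventually_happens'[OF trivial_limit_at_right_real] by blast
  then have c: "0 < c" "c \<le> b/2" and cB: "(C + 2*\<epsilon>/3) * b^(2*n) < (C + \<epsilon>) * (b - c)^(2*n)"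
    by auto
  define D where "D \<delta> = (C + \<epsilon>) * (b - c)^(2*n) * c powr (2*\<delta>)
      - ((1 + \<eta>) * (b^n * falling_fact (real n - 1/2 + \<delta>) n)^2 * b powr (2*\<delta>) + 2*\<delta> * ((1 + 1/\<eta>) * K^2 * b))"
    for \<delta>
  have "(D \<longlongrightarrow> (C + \<epsilon>) * (b - c)^(2*n) * c powr (2*0)
      - ((1 + \<eta>) * (b^n * falling_fact (real n - 1/2) n)^2 * b powr (2*0) + 2*0 * ((1 + 1/\<eta>) * K^2 * b))) (at_right 0)"
    unfolding D_def using b c by (intro tendsto_intros falling_fact_tendsto) auto
  moreover have "(b^n * falling_fact (real n - 1/2) n)^2 = b^(2*n) * C"
    by (simp add: power_mult_distrib falling_fact_half_sq C_def power_mult[symmetric] mult.commute)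
  ultimately have "(D \<longlongrightarrow> (C + \<epsilon>) * (b - c)^(2*n) - (1 + \<eta>) * (b^(2*n) * C)) (at_right 0)"
    using b c by simp
  moreover have "(1 + \<eta>) * (b^(2*n) * C) = (C + \<epsilon>/3) * b^(2*n)"
    using \<eta>(2) by (simp add: mult.commute mult.left_commute)
  ultimately have "(D \<longlongrightarrow> (C + \<epsilon>) * (b - c)^(2*n) - (C + \<epsilon>/3) * b^(2*n)) (at_right 0)"
    by simp
  moreover have "0 < (C + \<epsilon>) * (b - c)^(2*n) - (C + \<epsilon>/3) * b^(2*n)"
  proof -
    have "(C + \<epsilon>/3) * b^(2*n) < (C + 2*\<epsilon>/3) * b^(2*n)" using b e by (intro mult_strict_right_mono) auto
    then show ?thesis using cB by linarith
  qed
  ultimately have "\<forall>\<^sub>F \<delta> in at_right 0. 0 < D \<delta>" by (rule order_tendstoD(1))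
  moreover have "\<forall>\<^sub>F \<delta> in at_right (0::real). \<delta> < 1/2" by (intro order_tendstoD(2)[OF tendsto_ident_at]) simp
  ultimately have "\<forall>\<^sub>F \<delta> in at_right 0. 0 < \<delta> \<and> \<delta> < 1/2 \<and> 0 < D \<delta>"
    by (intro eventually_conj eventually_at_right_less)
  then obtain \<delta> where d: "0 < \<delta>" "\<delta> < 1/2" and D: "0 < D \<delta>"
    using eventually_happens'[OF trivial_limit_at_right_real] by blast
  have "(1 + \<eta>) * (b^n * falling_fact (real n - 1/2 + \<delta>) n)^2 * b powr (2*\<delta>) + 2*\<delta> * ((1 + 1/\<eta>) * K^2 * b)
      \<le> (C + \<epsilon>) * (b - c)^(2*n) * c powr (2*\<delta>)"
    using D by (simp add: D_def)
  then have "((1 + \<eta>) * (b^n * falling_fact (real n - 1/2 + \<delta>) n)^2 * b powr (2*\<delta>) + 2*\<delta> * ((1 + 1/\<eta>) * K^2 * b)) / (2*\<delta>)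
      \<le> (C + \<epsilon>) * (b - c)^(2*n) * c powr (2*\<delta>) / (2*\<delta>)"
    using d by (intro divide_right_mono) auto
  then have "(1 + \<eta>) * (b^n * falling_fact (real n - 1/2 + \<delta>) n)^2 * (b powr (2*\<delta>) / (2*\<delta>)) + (1 + 1/\<eta>) * K^2 * b
      \<le> (C + \<epsilon>) * ((b - c)^(2*n) * (c powr (2*\<delta>) / (2*\<delta>)))"
    using d by (simp add: add_divide_distrib mult.assoc)
  then show ?thesis using \<eta>(1) c d by blast
qed
lemma hardy_constant_sharp:
  assumes b: "0 < b" and n: "1 \<le> n" and nontrivial: "\<exists>v :: 'a::{banach, second_countable_topology}. v \<noteq> 0"
    and e: "0 < \<epsilon>"
  shows "\<exists>(f :: real \<Rightarrow> 'a) g. deriv_chain b n f g \<and> (\<forall>k\<le>n. L2_on b (g k))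
         \<and> (\<exists>x\<in>{0..b}. f x \<noteq> 0) \<and>
         \<not> ((\<integral>\<^sup>+ x\<in>{0<..<b}. ennreal ((norm (g n x))\<^sup>2) \<partial>lebesgue)
           > ennreal ((real (odd_double_fact n))\<^sup>2 / 2 ^ (2 * n) + \<epsilon>) * (\<integral>\<^sup>+ x\<in>{0<..<b}. ennreal ((norm (f x))\<^sup>2 / (dist_bd b x) ^ (2 * n)) \<partial>lebesgue))"
proof -
  obtain v :: 'a where v: "v \<noteq> 0" using nontrivial by blast
  define C where "C = (real (odd_double_fact n))\<^sup>2 / 2 ^ (2 * n)"
  obtain \<eta> c \<delta> where eta: "0 < \<eta>" and c: "0 < c" "c \<le> b/2" and d: "0 < \<delta>" "\<delta> < 1/2"
    and ineq: "(1 + \<eta>) * (b^n * falling_fact (real n - 1/2 + \<delta>) n)^2 * (b powr (2*\<delta>) / (2*\<delta>)) + (1 + 1/\<eta>) * (hardy_test_bound n b)^2 * b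
       \<le> (C + \<epsilon>) * ((b - c)^(2*n) * (c powr (2*\<delta>) / (2*\<delta>)))"
    using hardy_sharpness_parameters[OF b e, of n "hardy_test_bound n b"] unfolding C_def by blast
  define p where "p = real n - 1/2 + \<delta>"
  define g where "g j x = hardy_test n b p j x *\<^sub>R v" for j x
  define f where "f x = hardy_test n b p 0 x *\<^sub>R v" for x
  have chain: "deriv_chain b n f g \<and> (\<forall>k\<le>n. L2_on b (g k))"
    unfolding f_def[abs_def] g_def[abs_def]
    using hardy_test_deriv_chain[OF b n d p_def] L2_on_hardy_test[OF b n d p_def] by blast
  have nz: "f (b/2) \<noteq> 0"
  proof -
    have "hardy_test n b p 0 (b/2) = (b/2) powr p * (b - b/2)^n" using b by (rule hardy_test_0_eq[of "b/2", simplified])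
    moreover have "0 < (b/2) powr p * (b - b/2)^n" using b by simp
    ultimately show ?thesis using v b by (simp add: f_def)
  qed
  have nonneg: "0 \<le> (b - c)^(2*n) * (c powr (2*\<delta>) / (2*\<delta>))" using c d b by simp
  have "(\<integral>\<^sup>+ x\<in>{0<..<b}. ennreal ((norm (g n x))\<^sup>2) \<partial>lebesgue)
      \<le> ennreal ((norm v)^2 * ((1 + \<eta>) * (b^n * falling_fact p n)^2 * (b powr (2*\<delta>) / (2*\<delta>)) + (1 + 1/\<eta>) * (hardy_test_bound n b)^2 * b))"
    unfolding g_def by (rule hardy_test_energy_le[OF b n d p_def eta])
  also have "\<dots> \<le> ennreal ((norm v)^2 * ((C + \<epsilon>) * ((b - c)^(2*n) * (c powr (2*\<delta>) / (2*\<delta>)))))"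
    using ineq by (intro ennreal_leI mult_left_mono) (auto simp: p_def)
  also have "\<dots> = ennreal (C + \<epsilon>) * ennreal ((norm v)^2 * (b - c)^(2*n) * (c powr (2*\<delta>) / (2*\<delta>)))"
  proof -
    have C_eps: "0 \<le> C + \<epsilon>" using e by (simp add: C_def)
    have nonneg_v: "0 \<le> (norm v)^2 * (b - c)^(2*n) * (c powr (2*\<delta>) / (2*\<delta>))"
      using nonneg mult_nonneg_nonneg[OF zero_le_power2[of "norm v"] nonneg] by (simp only: mult.assoc)
    have eq: "(norm v)^2 * ((C + \<epsilon>) * ((b - c)^(2*n) * (c powr (2*\<delta>) / (2*\<delta>))))
       = (C + \<epsilon>) * ((norm v)^2 * (b - c)^(2*n) * (c powr (2*\<delta>) / (2*\<delta>)))" by (simp only: mult_ac)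
    show ?thesis unfolding eq by (rule ennreal_mult[OF C_eps nonneg_v])
  qed
  also have "\<dots> \<le> ennreal (C + \<epsilon>) * (\<integral>\<^sup>+ x\<in>{0<..<b}. ennreal ((norm (f x))\<^sup>2 / (dist_bd b x) ^ (2 * n)) \<partial>lebesgue)"
    unfolding f_def by (intro mult_left_mono hardy_test_weighted_ge[OF b n d p_def c]) simp
  finally have le: "(\<integral>\<^sup>+ x\<in>{0<..<b}. ennreal ((norm (g n x))\<^sup>2) \<partial>lebesgue)
     \<le> ennreal (C + \<epsilon>) * (\<integral>\<^sup>+ x\<in>{0<..<b}. ennreal ((norm (f x))\<^sup>2 / (dist_bd b x) ^ (2 * n)) \<partial>lebesgue)" .
  have "b/2 \<in> {0..b}" using b by simp
  then show ?thesis using chain nz le unfolding C_def by (intro exI[of _ f] exI[of _ g]) (auto simp: not_less)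
qed

theorem theorem9p2:
  fixes b :: real and n :: nat
  assumes "0 < b" and "1 \<le> n"
  defines "C \<equiv> (real (odd_double_fact n))\<^sup>2 / 2 ^ (2 * n)"
  shows
   "(H_n b n = (H0_n b n :: (real \<Rightarrow> 'a::{real_inner, banach, second_countable_topology}) set))
    \<and> (\<exists>c1 c2. 0 < c1 \<and> 0 < c2 \<and>
         (\<forall>(f :: real \<Rightarrow> 'a) g. deriv_chain b n f g \<and> (\<forall>k\<le>n. L2_on b (g k)) \<longrightarrow>
            c1 * sobolev_norm b n g \<le> L2_norm_on b (g n) \<and>
            L2_norm_on b (g n) \<le> c2 * sobolev_norm b n g))
    \<and> (\<forall>(f :: real \<Rightarrow> 'a) g. deriv_chain b n f g \<and> (\<forall>k\<le>n. L2_on b (g k))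
         \<and> (\<exists>x\<in>{0..b}. f x \<noteq> 0) \<longrightarrow>
         (\<integral>\<^sup>+ x\<in>{0<..<b}. ennreal ((norm (g n x))\<^sup>2) \<partial>lebesgue)
           > ennreal C * (\<integral>\<^sup>+ x\<in>{0<..<b}. ennreal ((norm (f x))\<^sup>2 / (dist_bd b x) ^ (2 * n)) \<partial>lebesgue))
    \<and> ((\<exists>v :: 'a. v \<noteq> 0) \<longrightarrow>
        (\<forall>\<epsilon>>0. \<exists>(f :: real \<Rightarrow> 'a) g. deriv_chain b n f g \<and> (\<forall>k\<le>n. L2_on b (g k))
         \<and> (\<exists>x\<in>{0..b}. f x \<noteq> 0) \<and>
         \<not> ((\<integral>\<^sup>+ x\<in>{0<..<b}. ennreal ((norm (g n x))\<^sup>2) \<partial>lebesgue)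
           > ennreal (C + \<epsilon>) * (\<integral>\<^sup>+ x\<in>{0<..<b}. ennreal ((norm (f x))\<^sup>2 / (dist_bd b x) ^ (2 * n)) \<partial>lebesgue))))"
  unfolding C_def
  by (intro conjI allI impI H_n_eq_H0_n sobolev_norm_equivalent assms(1))
    (simp add: deriv_chain_hardy_inequality_strict[OF assms(1,2)],
     use hardy_constant_sharp[OF assms(1,2)] in blast)

end
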